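(* Assume there exists a set $\mathcal{X}_{\mathrm{f}}$ such that for all $z\in\mathcal{X}_{\mathrm{f}}$, $(z,Kz)\in\overline{\mathcal{Z}}_k$ for all $k\ge0$ and $(A+BK)z\in\mathcal{X}_{\mathrm{f}}$ (i.e., the terminal controller equals the tube feedback $K$), and that the terminal cost $V_{\mathrm{f}}(x)=x^\top P_{\mathrm{f}}x+p_{\mathrm{f}}^\top x$ satisfies $V_{\mathrm{f}}((A+BK)x)=V_{\mathrm{f}}(x)-\ell(x,Kx)$ for all $x\in\mathbb{R}^n$. Suppose Problem $\mathcal{P}_k$ (with the expected cost $\mathcal{J}_N$ below) is feasible at $k=0$. Then for all $k\in\mathbb{Z}_{\ge0}$, $$\mathbb{E}\big[\mathcal{J}_N^\star(x(k+1),z^\star_{1|k})-\mathcal{J}_N^\star(x(k),z^\star_{1|k-1})\big]\le -\ell(x(k),u(k))+\mathrm{tr}(P_{\mathrm{f}}\Sigma_{\mathrm{w}}),$$ where the expectation is over $w(k)$ given the past. Moreover, if $\ell$ is bounded from below on $\mathbb{R}^n\times\mathbb{R}^m$, then $$\limsup_{T\to\infty}\frac1T\sum_{k=0}^{T-1}\mathbb{E}[\ell(x(k),u(k))]\le \mathrm{tr}(P_{\mathrm{f}}\Sigma_{\mathrm{w}}).$$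
   Context: Consider $x(k+1)=Ax(k)+Bu(k)+w(k)$, $x(0)=x_0$, where the $w(k)\in\mathbb{R}^n$ are i.i.d., zero mean, covariance $\Sigma_{\mathrm{w}}\succ0$; $K\in\mathbb{R}^{m\times n}$ with $A_K:=A+BK$ Schur. Stage cost $\ell(x,u)=x^\top Qx+x^\top q+u^\top Ru+u^\top r$ with $Q,R\succeq0$. At time $k$, Problem $\mathcal{P}_k$ is: minimize $\mathcal{J}_N(x(k),z_{\cdot|k},v_{\cdot|k},\lambda_k)$ over $v_{0|k},\dots,v_{N-1|k}$, $z_{0|k},\dots,z_{N|k}$, $\lambda_k$ subject to $z_{0|k}=(1-\lambda_k)z^\star_{1|k-1}+\lambda_k x(k)$, $\lambda_k\in[0,1]$; $z_{i+1|k}=Az_{i|k}+Bv_{i|k}$; $(z_{i|k},v_{i|k})\in\overline{\mathcal{Z}}_{k+i}$ for $i=0,\dots,N-1$; $z_{N|k}\in\mathcal{X}_{\mathrm{f}}$, with given sets $\overline{\mathcal{Z}}_k\subseteq\mathbb{R}^{n+m}$ and $z^\star_{1|-1}:=x_0$. Its optimal value is $\mathcal{J}_N^\star(x(k),z^\star_{1|k-1})$ and $(z^\star_{\cdot|k},v^\star_{\cdot|k},\lambda^\star_k)$ a minimizer; the closed loop applies $u(k)=v^\star_{0|k}+K(x(k)-z^\star_{0|k})$. The cost is $\mathcal{J}_N=\mathbb{E}\big[\sum_{i=0}^{N-1}\ell(x_{i|k},u_{i|k})+V_{\mathrm{f}}(x_{N|k})\big]$ where $x_{0|k}=x(k)$,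 $u_{i|k}=v_{i|k}+K(x_{i|k}-z_{i|k})$, $x_{i+1|k}=Ax_{i|k}+Bu_{i|k}+w(k+i)$; equivalently, with the mean $\overline{x}_{0|k}=x(k)$, $\overline{u}_{i|k}=v_{i|k}+K(\overline{x}_{i|k}-z_{i|k})$, $\overline{x}_{i+1|k}=A\overline{x}_{i|k}+B\overline{u}_{i|k}$, one has $\mathcal{J}_N=\sum_{i=0}^{N-1}\ell(\overline{x}_{i|k},\overline{u}_{i|k})+V_{\mathrm{f}}(\overline{x}_{N|k})+\sum_{i=0}^{N-1}\mathrm{tr}((Q+K^\top RK)\Sigma_{\mathrm{x},i})+\mathrm{tr}(P_{\mathrm{f}}\Sigma_{\mathrm{x},N})$ with $\Sigma_{\mathrm{x},0}=0$, $\Sigma_{\mathrm{x},i+1}=A_K\Sigma_{\mathrm{x},i}A_K^\top+\Sigma_{\mathrm{w}}$. *)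

theory Defs
  imports "HOL-Analysis.Analysis" "HOL-Probability.Probability"
begin

definition psd_mat :: "real^'n^'n \<Rightarrow> bool" where
  "psd_mat M \<longleftrightarrow> transpose M = M \<and> (\<forall>x. 0 \<le> x \<bullet> (M *v x))"

definition pd_mat :: "real^'n^'n \<Rightarrow> bool" where
  "pd_mat M \<longleftrightarrow> transpose M = M \<and> (\<forall>x. x \<noteq> 0 \<longrightarrow> 0 < x \<bullet> (M *v x))"

definition cmat :: "real^'n^'n \<Rightarrow> complex^'n^'n" where
  "cmat M = (\<chi> i j. complex_of_real (M $ i $ j))"

definition schur :: "real^'n^'n \<Rightarrow> bool" where
  "schur M \<longleftrightarrow> (\<forall>(lam::complex) v. v \<noteq> 0 \<and> cmat M *v v = lam *s v \<longrightarrow> cmod lam < 1)"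

definition stage_cost :: "real^'n^'n \<Rightarrow> real^'n \<Rightarrow> real^'m^'m \<Rightarrow> real^'m
    \<Rightarrow> real^'n \<Rightarrow> real^'m \<Rightarrow> real" where
  "stage_cost Q q R r x u = x \<bullet> (Q *v x) + x \<bullet> q + u \<bullet> (R *v u) + u \<bullet> r"

definition term_cost :: "real^'n^'n \<Rightarrow> real^'n \<Rightarrow> real^'n \<Rightarrow> real" where
  "term_cost Pf pf x = x \<bullet> (Pf *v x) + pf \<bullet> x"

text \<open>Decision variables of Problem P_k: (z_{0..N|k}, v_{0..N-1|k}, lambda_k).\<close>
type_synonym ('n, 'm) dec = "(nat \<Rightarrow> real^'n) \<times> (nat \<Rightarrow> real^'m) \<times> real"

fun mean_state :: "real^'n^'n \<Rightarrow> real^'m^'n \<Rightarrow> real^'n^'m \<Rightarrow> real^'n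
    \<Rightarrow> (nat \<Rightarrow> real^'n) \<Rightarrow> (nat \<Rightarrow> real^'m) \<Rightarrow> nat \<Rightarrow> real^'n" where
  "mean_state A B K x z v 0 = x"
| "mean_state A B K x z v (Suc i) =
     (let xb = mean_state A B K x z v i in A *v xb + B *v (v i + K *v (xb - z i)))"

definition mean_input :: "real^'n^'n \<Rightarrow> real^'m^'n \<Rightarrow> real^'n^'m \<Rightarrow> real^'n
    \<Rightarrow> (nat \<Rightarrow> real^'n) \<Rightarrow> (nat \<Rightarrow> real^'m) \<Rightarrow> nat \<Rightarrow> real^'m" where
  "mean_input A B K x z v i = v i + K *v (mean_state A B K x z v i - z i)"

fun state_cov :: "real^'n^'n \<Rightarrow> real^'n^'n \<Rightarrow> nat \<Rightarrow> real^'n^'n" where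
  "state_cov AK Sw 0 = 0"
| "state_cov AK Sw (Suc i) = AK ** state_cov AK Sw i ** transpose AK + Sw"

text \<open>The expected cost \<open>J_N\<close>, written in its (stated) equivalent mean/covariance form.\<close>
definition cost_JN :: "nat \<Rightarrow> real^'n^'n \<Rightarrow> real^'m^'n \<Rightarrow> real^'n^'m
    \<Rightarrow> real^'n^'n \<Rightarrow> real^'n \<Rightarrow> real^'m^'m \<Rightarrow> real^'m
    \<Rightarrow> real^'n^'n \<Rightarrow> real^'n \<Rightarrow> real^'n^'n
    \<Rightarrow> real^'n \<Rightarrow> ('n, 'm) dec \<Rightarrow> real" where
  "cost_JN N A B K Q q R r Pf pf Sw x d =
     (case d of (z, v, lam) \<Rightarrow>
        (\<Sum>i<N. stage_cost Q q R r (mean_state A B K x z v i) (mean_input A B K x z v i))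
        + term_cost Pf pf (mean_state A B K x z v N)
        + (\<Sum>i<N. trace ((Q + transpose K ** R ** K) ** state_cov (A + B ** K) Sw i))
        + trace (Pf ** state_cov (A + B ** K) Sw N))"

text \<open>Feasible set of Problem P_k at state x with previous \<open>z*_{1|k-1} = zp\<close>.\<close>
definition feasible :: "nat \<Rightarrow> real^'n^'n \<Rightarrow> real^'m^'n \<Rightarrow> (nat \<Rightarrow> ((real^'n) \<times> (real^'m)) set)
    \<Rightarrow> (real^'n) set \<Rightarrow> nat \<Rightarrow> real^'n \<Rightarrow> real^'n \<Rightarrow> ('n, 'm) dec \<Rightarrow> bool" where
  "feasible N A B Zb Xf k x zp d =
     (case d of (z, v, lam) \<Rightarrow>
        z 0 = (1 - lam) *\<^sub>R zp + lam *\<^sub>R x \<and> 0 \<le> lam \<and> lam \<le> 1 \<and>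
        (\<forall>i<N. z (Suc i) = A *v z i + B *v v i) \<and>
        (\<forall>i<N. (z i, v i) \<in> Zb (k + i)) \<and>
        z N \<in> Xf)"

definition opt_val :: "nat \<Rightarrow> real^'n^'n \<Rightarrow> real^'m^'n \<Rightarrow> real^'n^'m
    \<Rightarrow> real^'n^'n \<Rightarrow> real^'n \<Rightarrow> real^'m^'m \<Rightarrow> real^'m
    \<Rightarrow> real^'n^'n \<Rightarrow> real^'n \<Rightarrow> real^'n^'n
    \<Rightarrow> (nat \<Rightarrow> ((real^'n) \<times> (real^'m)) set) \<Rightarrow> (real^'n) set
    \<Rightarrow> nat \<Rightarrow> real^'n \<Rightarrow> real^'n \<Rightarrow> real" where
  "opt_val N A B K Q q R r Pf pf Sw Zb Xf k x zp =
     Inf {cost_JN N A B K Q q R r Pf pf Sw x d | d. feasible N A B Zb Xf k x zp d}"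

definition is_minimizer :: "nat \<Rightarrow> real^'n^'n \<Rightarrow> real^'m^'n \<Rightarrow> real^'n^'m
    \<Rightarrow> real^'n^'n \<Rightarrow> real^'n \<Rightarrow> real^'m^'m \<Rightarrow> real^'m
    \<Rightarrow> real^'n^'n \<Rightarrow> real^'n \<Rightarrow> real^'n^'n
    \<Rightarrow> (nat \<Rightarrow> ((real^'n) \<times> (real^'m)) set) \<Rightarrow> (real^'n) set
    \<Rightarrow> nat \<Rightarrow> real^'n \<Rightarrow> real^'n \<Rightarrow> ('n, 'm) dec \<Rightarrow> bool" where
  "is_minimizer N A B K Q q R r Pf pf Sw Zb Xf k x zp d \<longleftrightarrow>
     feasible N A B Zb Xf k x zp d \<and>
     (\<forall>d'. feasible N A B Zb Xf k x zp d' \<longrightarrow>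
        cost_JN N A B K Q q R r Pf pf Sw x d \<le> cost_JN N A B K Q q R r Pf pf Sw x d')"

text \<open>\<open>sol k x zp\<close> is the minimizer of P_k selected by the controller. Given a noise sequence
  \<open>\<omega>\<close> (with \<open>w(k) = \<omega> k\<close>), \<open>closed_loop \<dots> \<omega> k = (x(k), z*_{1|k-1})\<close>, with
  \<open>z*_{1|-1} = x0\<close>.\<close>
definition cl_input :: "real^'n^'m \<Rightarrow> (nat \<Rightarrow> real^'n \<Rightarrow> real^'n \<Rightarrow> ('n, 'm) dec)
    \<Rightarrow> nat \<Rightarrow> (real^'n) \<times> (real^'n) \<Rightarrow> real^'m" where
  "cl_input K sol k s =
     (case sol k (fst s) (snd s) of (z, v, lam) \<Rightarrow> v 0 + K *v (fst s - z 0))"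

fun closed_loop :: "real^'n^'n \<Rightarrow> real^'m^'n \<Rightarrow> real^'n^'m
    \<Rightarrow> (nat \<Rightarrow> real^'n \<Rightarrow> real^'n \<Rightarrow> ('n, 'm) dec) \<Rightarrow> real^'n
    \<Rightarrow> (nat \<Rightarrow> real^'n) \<Rightarrow> nat \<Rightarrow> (real^'n) \<times> (real^'n)" where
  "closed_loop A B K sol x0 \<omega> 0 = (x0, x0)"
| "closed_loop A B K sol x0 \<omega> (Suc k) =
     (let s = closed_loop A B K sol x0 \<omega> k
      in (A *v fst s + B *v cl_input K sol k s + \<omega> k, fst (sol k (fst s) (snd s)) 1))"

end

theory Submission
  imports Defs "Jordan_Normal_Form.Spectral_Radius"
begin

text \<open>Dropping the first stage of the optimal tube at time \<open>k\<close> and closing it with the terminal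
  feedback \<open>K\<close> gives a feasible candidate at time \<open>k + 1\<close> (with \<open>\<lambda> = 0\<close>, whatever the
  noise). Its predicted mean differs from the old prediction by \<open>(A + BK)\<^sup>i w(k)\<close>: the terminal
  decrease condition absorbs the appended stage, the cross terms are linear in \<open>w(k)\<close> and the
  quadratic terms telescope to \<open>w(k)\<^sup>T P\<^sub>f w(k)\<close>. So the optimal value decreases by the applied
  stage cost up to a zero-mean term and \<open>w(k)\<^sup>T P\<^sub>f w(k)\<close>, whose mean is \<open>tr(P\<^sub>f \<Sigma>\<^sub>w)\<close>.

  If the stage cost is bounded below, then \<open>P\<^sub>f\<close> is positive semidefinite (telescope the decrease
  along \<open>(A + BK)\<^sup>i y \<longrightarrow> 0\<close>) and the terminal cost is bounded below, so the optimal value is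
  bounded below and integrable along the closed loop; summing the expected decrease over \<open>k < T\<close>
  and dividing by \<open>T\<close> bounds the average cost.\<close>

section \<open>Quadratic forms\<close>

definition quad_form :: "real^'n^'n \<Rightarrow> real^'n \<Rightarrow> real" where
  "quad_form S y = y \<bullet> (S *v y)"

lemma matrix_vector_mult_uminus: "M *v (- y) = - (M *v (y::real^'n))"
  by (simp add: Finite_Cartesian_Product.vec_eq_iff matrix_vector_mult_def sum_negf)

lemma quad_form_uminus [simp]: "quad_form S (- y) = quad_form S y"
  by (simp add: quad_form_def matrix_vector_mult_uminus)

lemma quad_form_zero [simp]: "quad_form S 0 = 0"
  by (simp add: quad_form_def)

lemma quad_form_scaleR: "quad_form S (t *\<^sub>R y) = t\<^sup>2 * quad_form S y"
  by (simp add: quad_form_def matrix_vector_mult_scaleR power2_eq_square)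

lemma quad_form_add:
  "quad_form S (x + y) = quad_form S x + (x \<bullet> (S *v y) + y \<bullet> (S *v x)) + quad_form S y"
  by (simp add: quad_form_def matrix_vector_right_distrib inner_add_left inner_add_right)

lemma quad_form_add_le:
  assumes nonneg: "\<And>z. 0 \<le> quad_form S z"
  shows "quad_form S (x + y) \<le> 2 * quad_form S x + 2 * quad_form S y"
proof -
  have "quad_form S (x + y) + quad_form S (x - y) = 2 * quad_form S x + 2 * quad_form S y"
    by (simp add: quad_form_def matrix_vector_right_distrib matrix_vector_mult_diff_distrib
        inner_add_left inner_add_right inner_diff_left inner_diff_right algebra_simps)
  then show ?thesis using nonneg[of "x - y"] by linarith
qed

lemma quad_form_matrix_vector_mult: "quad_form S (M *v w) = quad_form (transpose M ** S ** M) w"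
proof -
  have "quad_form (transpose M ** S ** M) w = w \<bullet> (transpose M *v (S *v (M *v w)))"
    by (simp add: quad_form_def matrix_vector_mul_assoc matrix_mul_assoc)
  also have "\<dots> = (M *v w) \<bullet> (S *v (M *v w))"
    by (metis dot_lmul_matrix inner_commute transpose_matrix_vector)
  finally show ?thesis by (simp add: quad_form_def)
qed

lemma quad_form_eq_sum: "quad_form S w = (\<Sum>i\<in>UNIV. \<Sum>j\<in>UNIV. S $ i $ j * (w $ i * w $ j))"
  unfolding quad_form_def
  by (simp add: inner_vec_def matrix_vector_mult_def sum_distrib_left algebra_simps)

lemma continuous_on_quad_form: "continuous_on T (quad_form S)"
  unfolding quad_form_def[abs_def]
  by (intro continuous_on_inner continuous_on_id
      bounded_linear.continuous_on[OF matrix_vector_mul_bounded_linear])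

lemma tendsto_quad_form_zero:
  assumes "f \<longlonglongrightarrow> 0" shows "(\<lambda>n. quad_form S (f n)) \<longlonglongrightarrow> 0"
proof -
  have "(\<lambda>n. S *v f n) \<longlonglongrightarrow> S *v 0"
    by (rule bounded_linear.tendsto[OF matrix_vector_mul_bounded_linear assms])
  from tendsto_inner[OF assms this] show ?thesis unfolding quad_form_def by simp
qed

lemma psd_mat_quad_form_nonneg: "psd_mat S \<Longrightarrow> 0 \<le> quad_form S y"
  unfolding psd_mat_def quad_form_def by auto

lemma stage_cost_eq_quad_form:
  "stage_cost Q q R r x u = quad_form Q x + x \<bullet> q + quad_form R u + u \<bullet> r"
  by (simp add: stage_cost_def quad_form_def)

lemma term_cost_eq_quad_form: "term_cost Pf pf x = quad_form Pf x + pf \<bullet> x"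
  by (simp add: term_cost_def quad_form_def)

lemma stage_cost_add:
  "stage_cost Q q R r (y + a) (u + b) = stage_cost Q q R r y u
     + (y \<bullet> (Q *v a) + a \<bullet> (Q *v y) + a \<bullet> q + u \<bullet> (R *v b) + b \<bullet> (R *v u) + b \<bullet> r)
     + (quad_form Q a + quad_form R b)"
  by (simp add: stage_cost_eq_quad_form quad_form_add inner_add_left)

lemma term_cost_add:
  "term_cost Pf pf (y + a) = term_cost Pf pf y + (y \<bullet> (Pf *v a) + a \<bullet> (Pf *v y) + pf \<bullet> a)
     + quad_form Pf a"
  by (simp add: term_cost_eq_quad_form quad_form_add inner_add_right)

text \<open>A null vector of a nonnegative form is orthogonal to everything in the bilinear form:
  otherwise moving along it would make the form negative.\<close>
lemma quad_form_null_cross_zero: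
  assumes nonneg: "\<And>y. 0 \<le> quad_form S y" and null: "quad_form S z = 0"
  shows "x \<bullet> (S *v z) + z \<bullet> (S *v x) = 0"
proof (rule ccontr)
  let ?c = "x \<bullet> (S *v z) + z \<bullet> (S *v x)"
  assume ne: "?c \<noteq> 0"
  define t where "t = - (quad_form S x + 1) / ?c"
  have "quad_form S (x + t *\<^sub>R z) = quad_form S x + t * ?c"
    using null by (simp add: quad_form_add quad_form_scaleR matrix_vector_mult_scaleR algebra_simps)
  also have "\<dots> = -1" using ne by (simp add: t_def)
  finally show False using nonneg[of "x + t *\<^sub>R z"] by simp
qed

lemma quad_form_add_null:
  assumes "\<And>y. 0 \<le> quad_form S y" and "quad_form S z = 0"
  shows "quad_form S (x + z) = quad_form S x"
  using quad_form_add[of S x z] quad_form_null_cross_zero[OF assms, of x] assms(2) by simp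

lemma subspace_quad_form_null:
  assumes "\<And>y. 0 \<le> quad_form S y"
  shows "Real_Vector_Spaces.subspace {z. quad_form S z = 0}"
proof (rule real_vector.subspaceI)
  fix x y assume "x \<in> {z. quad_form S z = 0}" "y \<in> {z. quad_form S z = 0}"
  then show "x + y \<in> {z. quad_form S z = 0}" using quad_form_add_null[OF assms, of y x] by simp
qed (simp_all add: quad_form_scaleR)

lemma quad_form_coercive_on_null_complement:
  assumes nonneg: "\<And>y. 0 \<le> quad_form S y"
  obtains m where "0 < m"
    and "\<And>z. (\<And>w. quad_form S w = 0 \<Longrightarrow> z \<bullet> w = 0) \<Longrightarrow> m * (norm z)\<^sup>2 \<le> quad_form S z"
proof -
  define U where "U = {u. norm u = 1 \<and> (\<forall>w. quad_form S w = 0 \<longrightarrow> u \<bullet> w = 0)}"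
  have unit_in_U: "z /\<^sub>R norm z \<in> U" if "z \<noteq> 0" "\<And>w. quad_form S w = 0 \<Longrightarrow> z \<bullet> w = 0" for z
    using that by (simp add: U_def)
  have quad_unit: "quad_form S (z /\<^sub>R norm z) = quad_form S z / (norm z)\<^sup>2" for z
    by (simp add: quad_form_scaleR power_inverse divide_inverse mult.commute)
  show ?thesis
  proof (cases "U = {}")
    case True
    show ?thesis
    proof (rule that[of 1])
      fix z assume "\<And>w. quad_form S w = 0 \<Longrightarrow> z \<bullet> w = 0"
      then have "z = 0" using unit_in_U True by blast
      then show "1 * (norm z)\<^sup>2 \<le> quad_form S z" by simp
    qed simp
  next
    case False
    have "U = sphere 0 1 \<inter> (\<Inter>w\<in>{w. quad_form S w = 0}. {u. w \<bullet> u = 0})"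
      by (auto simp: U_def inner_commute)
    then have "compact U"
      by (simp only:) (intro compact_Int_closed compact_sphere closed_INT ballI closed_hyperplane)
    then obtain u0 where u0: "u0 \<in> U" "\<And>u. u \<in> U \<Longrightarrow> quad_form S u0 \<le> quad_form S u"
      using continuous_attains_inf[OF _ False continuous_on_quad_form] by blast
    have "quad_form S u0 \<noteq> 0"
      using u0(1) by (auto simp: U_def)
    then have pos: "0 < quad_form S u0" using nonneg[of u0] by linarith
    have "quad_form S u0 * (norm z)\<^sup>2 \<le> quad_form S z"
      if "\<And>w. quad_form S w = 0 \<Longrightarrow> z \<bullet> w = 0" for z
    proof (cases "z = 0")
      case False
      have "quad_form S u0 \<le> quad_form S z / (norm z)\<^sup>2"
        using u0(2)[OF unit_in_U[OF False that]] unfolding quad_unit .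
      then show ?thesis using False by (simp add: field_simps)
    qed simp
    with pos show ?thesis by (rule that)
  qed
qed

text \<open>Off its null space the form grows quadratically.\<close>
lemma quad_form_plus_inner_bounded_below:
  assumes nonneg: "\<And>y. 0 \<le> quad_form S y" and null: "\<And>z. quad_form S z = 0 \<Longrightarrow> p \<bullet> z = 0"
  obtains c where "\<And>y. c \<le> quad_form S y + p \<bullet> y"
proof -
  let ?W = "{z. quad_form S z = 0}"
  obtain m where m: "0 < m"
    and coercive: "\<And>z. (\<And>w. quad_form S w = 0 \<Longrightarrow> z \<bullet> w = 0) \<Longrightarrow> m * (norm z)\<^sup>2 \<le> quad_form S z"
    using quad_form_coercive_on_null_complement[OF nonneg] by blast
  have "- (norm p)\<^sup>2 / (4 * m) \<le> quad_form S y + p \<bullet> y" for y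
  proof -
    have span_W: "Real_Vector_Spaces.span ?W = ?W"
      using subspace_quad_form_null[OF nonneg] by (simp add: real_vector.span_eq_iff)
    obtain w z where w: "w \<in> Real_Vector_Spaces.span ?W"
      and z_orth: "\<And>v. v \<in> Real_Vector_Spaces.span ?W \<Longrightarrow> Linear_Algebra.orthogonal z v" and y: "y = w + z"
      using orthogonal_subspace_decomp_exists[of ?W y] by blast
    have w_null: "quad_form S w = 0" using w span_W by simp
    have z: "\<And>v. quad_form S v = 0 \<Longrightarrow> z \<bullet> v = 0"
      using z_orth span_W by (simp add: Linear_Algebra.orthogonal_def)
    have "quad_form S y + p \<bullet> y = quad_form S z + p \<bullet> z"
      using quad_form_add_null[OF nonneg w_null, of z] null[OF w_null]
      by (simp add: y add.commute inner_add_right)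
    moreover have "m * (norm z)\<^sup>2 - norm p * norm z \<le> quad_form S z + p \<bullet> z"
      using coercive[OF z] norm_cauchy_schwarz[of "-p" z] by simp
    moreover have "- (norm p)\<^sup>2 / (4 * m) \<le> m * (norm z)\<^sup>2 - norm p * norm z"
    proof -
      have "0 \<le> (2 * m * norm z - norm p)\<^sup>2" by simp
      then show ?thesis using m by (simp add: field_simps power2_eq_square)
    qed
    ultimately show ?thesis by linarith
  qed
  then show ?thesis by (rule that)
qed


section \<open>Powers of a Schur stable matrix\<close>

fun matpow :: "real^'n^'n \<Rightarrow> nat \<Rightarrow> real^'n^'n" where
  "matpow M 0 = Finite_Cartesian_Product.mat 1"
| "matpow M (Suc i) = M ** matpow M i"

lemma matpow_Suc_mult_vec: "matpow M (Suc i) *v w = M *v (matpow M i *v w)"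
  by (simp add: matrix_vector_mul_assoc)

lemma matpow_commute: "matpow M k ** M = M ** matpow M k"
  by (induction k) (simp_all add: matrix_mul_assoc[symmetric])

lemma eigenvalue_smult_mat_divide:
  fixes A :: "complex Matrix.mat"
  assumes A: "A \<in> carrier_mat n n" and a: "a \<noteq> 0" and ev: "eigenvalue (a \<cdot>\<^sub>m A) mu"
  shows "eigenvalue A (mu / a)"
proof -
  from ev obtain v where v: "v \<in> carrier_vec n" "v \<noteq> 0\<^sub>v n" "(a \<cdot>\<^sub>m A) *\<^sub>v v = mu \<cdot>\<^sub>v v"
    unfolding eigenvalue_def eigenvector_def using A by auto
  have "A *\<^sub>v v = (mu / a) \<cdot>\<^sub>v v"
  proof (rule eq_vecI)
    fix i assume "i < dim_vec ((mu / a) \<cdot>\<^sub>v v)"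
    then have i: "i < n" using v(1) by simp
    have "a * (A *\<^sub>v v) $ i = ((a \<cdot>\<^sub>m A) *\<^sub>v v) $ i"
      using i A v(1) by (simp add: scalar_prod_def sum_distrib_left algebra_simps)
    also have "\<dots> = mu * v $ i" using v(3) i v(1) by simp
    finally have eq: "a * (A *\<^sub>v v) $ i = mu * v $ i" .
    have "(A *\<^sub>v v) $ i = a * (A *\<^sub>v v) $ i / a" using a by simp
    also have "\<dots> = mu * v $ i / a" by (simp only: eq)
    finally show "(A *\<^sub>v v) $ i = ((mu / a) \<cdot>\<^sub>v v) $ i" using i v(1) by simp
  qed (use A v(1) in simp)
  then show ?thesis unfolding eigenvalue_def eigenvector_def using v A by auto
qed

text \<open>Scaling by \<open>s = 2 / (1 + \<rho>)\<close> keeps the spectral radius below one, so the powers of the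
  scaled matrix are bounded.\<close>
lemma spectral_radius_less_1_geometric_decay:
  fixes A :: "complex Matrix.mat"
  assumes A: "A \<in> carrier_mat n n" and n: "0 < n" and rad: "spectral_radius A < 1"
  shows "\<exists>c s. 1 < s \<and> (\<forall>k i j. i < n \<longrightarrow> j < n \<longrightarrow> cmod ((A ^\<^sub>m k) $$ (i, j)) \<le> c / s ^ k)"
proof -
  let ?rho = "spectral_radius A"
  define s where "s = 2 / (1 + ?rho)"
  have "0 \<le> ?rho"
    using spectral_radius_mem_max(1)[OF A n] by auto
  then have s: "1 < s" "s * ?rho < 1" using rad unfolding s_def by (auto simp: field_simps)
  have sA: "complex_of_real s \<cdot>\<^sub>m A \<in> carrier_mat n n" using A by simp
  have "spectral_radius (complex_of_real s \<cdot>\<^sub>m A) < 1"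
  proof -
    obtain mu where mu: "eigenvalue (complex_of_real s \<cdot>\<^sub>m A) mu"
      and rad_eq: "spectral_radius (complex_of_real s \<cdot>\<^sub>m A) = cmod mu"
      using spectral_radius_mem_max(1)[OF sA n] unfolding spectrum_def by auto
    have "cmod (mu / complex_of_real s) \<le> ?rho"
      using eigenvalue_smult_mat_divide[OF A _ mu] s(1)
      by (intro spectral_radius_mem_max(2)[OF A n]) (auto simp: spectrum_def)
    then have "cmod mu \<le> s * ?rho" using s(1) by (simp add: norm_divide field_simps)
    then show ?thesis using rad_eq s(2) by simp
  qed
  then obtain c where c: "\<And>k. norm_bound ((complex_of_real s \<cdot>\<^sub>m A) ^\<^sub>m k) c"
    using spectral_radius_jnf_norm_bound_less_1_upper_triangular[OF sA] by auto
  have pow: "(complex_of_real s \<cdot>\<^sub>m A) ^\<^sub>m k = (complex_of_real s ^ k) \<cdot>\<^sub>m (A ^\<^sub>m k)" for k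
  proof (induction k)
    case 0 then show ?case using A by (auto intro!: eq_matI)
  next
    case (Suc k)
    show ?case using Suc A
      by (simp add: mult_smult_distrib[of _ n n] mult_smult_assoc_mat[of _ n n]) (rule eq_matI, auto)
  qed
  have "cmod ((A ^\<^sub>m k) $$ (i, j)) \<le> c / s ^ k" if "i < n" "j < n" for k i j
  proof -
    have "s ^ k * cmod ((A ^\<^sub>m k) $$ (i, j)) \<le> c"
      using c[of k] A s(1) that unfolding norm_bound_def by (simp add: pow norm_mult norm_power)
    then show ?thesis using s(1) by (simp add: field_simps)
  qed
  with s(1) show ?thesis by blast
qed

text \<open>Schur stability is transferred, along an enumeration \<open>e\<close> of the index type, to the spectral
  radius of a \<open>Jordan_Normal_Form\<close> matrix, for which the library bounds the powers.\<close>
definition jnf_of_mat :: "(nat \<Rightarrow> 'n::finite) \<Rightarrow> real^'n^'n \<Rightarrow> complex Matrix.mat" where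
  "jnf_of_mat e M = Matrix.mat CARD('n) CARD('n) (\<lambda>(i, j). complex_of_real (M $ e i $ e j))"

definition jnf_of_vec :: "(nat \<Rightarrow> 'n::finite) \<Rightarrow> real^'n \<Rightarrow> complex Matrix.vec" where
  "jnf_of_vec e y = Matrix.vec CARD('n) (\<lambda>i. complex_of_real (y $ e i))"

lemma jnf_of_mat_carrier: "jnf_of_mat (e :: nat \<Rightarrow> 'n::finite) M \<in> carrier_mat CARD('n) CARD('n)"
  by (simp add: jnf_of_mat_def)

lemma jnf_of_vec_carrier: "jnf_of_vec (e :: nat \<Rightarrow> 'n::finite) y \<in> carrier_vec CARD('n)"
  by (simp add: jnf_of_vec_def)

context
  fixes e :: "nat \<Rightarrow> 'n::finite"
  assumes e: "bij_betw e {0..<CARD('n)} UNIV"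
begin

lemma sum_enumeration: "(\<Sum>j\<in>{0..<CARD('n)}. f (e j)) = (\<Sum>j\<in>UNIV. f j)"
  using sum.reindex_bij_betw[OF e] .

lemma jnf_of_mat_mult_vec: "jnf_of_mat e M *\<^sub>v jnf_of_vec e y = jnf_of_vec e (M *v y)"
proof (rule eq_vecI)
  fix i assume "i < dim_vec (jnf_of_vec e (M *v y))"
  then have i: "i < CARD('n)" by (simp add: jnf_of_vec_def)
  have "(jnf_of_mat e M *\<^sub>v jnf_of_vec e y) $ i
      = (\<Sum>j\<in>{0..<CARD('n)}. complex_of_real (M $ e i $ e j * y $ e j))"
    using i by (simp add: scalar_prod_def jnf_of_mat_def jnf_of_vec_def)
  also have "\<dots> = (\<Sum>j\<in>UNIV. complex_of_real (M $ e i $ j * y $ j))"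
    by (rule sum_enumeration)
  also have "\<dots> = jnf_of_vec e (M *v y) $ i"
    using i by (simp add: jnf_of_vec_def matrix_vector_mult_def)
  finally show "(jnf_of_mat e M *\<^sub>v jnf_of_vec e y) $ i = jnf_of_vec e (M *v y) $ i" .
qed (simp add: jnf_of_mat_def jnf_of_vec_def)

lemma jnf_of_mat_pow_mult_vec:
  "jnf_of_mat e M ^\<^sub>m k *\<^sub>v jnf_of_vec e y = jnf_of_vec e (matpow M k *v y)"
proof (induction k arbitrary: y)
  case 0 then show ?case using jnf_of_vec_carrier[of e y] by (simp add: jnf_of_mat_def)
next
  case (Suc k)
  have "jnf_of_mat e M ^\<^sub>m Suc k *\<^sub>v jnf_of_vec e y = jnf_of_mat e M ^\<^sub>m k *\<^sub>v (jnf_of_mat e M *\<^sub>v jnf_of_vec e y)"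
    using assoc_mult_mat_vec[OF pow_carrier_mat[OF jnf_of_mat_carrier] jnf_of_mat_carrier
        jnf_of_vec_carrier] by simp
  also have "\<dots> = jnf_of_vec e (matpow M k *v (M *v y))" by (simp add: jnf_of_mat_mult_vec Suc.IH)
  also have "matpow M k *v (M *v y) = matpow M (Suc k) *v y"
    by (simp add: matrix_vector_mul_assoc matpow_commute)
  finally show ?case .
qed

lemma eigenvalue_jnf_of_mat:
  assumes "eigenvalue (jnf_of_mat e M) mu"
  obtains v where "v \<noteq> 0" "cmat M *v v = mu *s v"
proof -
  let ?d = "CARD('n)"
  have dim: "dim_row (jnf_of_mat e M) = ?d" by (simp add: jnf_of_mat_def)
  from assms obtain v where v: "v \<in> carrier_vec ?d" "v \<noteq> 0\<^sub>v ?d" "jnf_of_mat e M *\<^sub>v v = mu \<cdot>\<^sub>v v"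
    unfolding eigenvalue_def eigenvector_def by (auto simp: dim)
  define ei where "ei = the_inv_into {0..<?d} e"
  have ei: "ei (e i) = i" if "i < ?d" for i
    unfolding ei_def using e that by (simp add: bij_betw_def the_inv_into_f_f)
  have e_ei: "e (ei j) = j" and ei_less: "ei j < ?d" for j
    unfolding ei_def using e the_inv_into_into[of e "{0..<?d}" j "{0..<?d}"]
    by (auto simp: bij_betw_def f_the_inv_into_f)
  define V :: "complex^'n" where "V = (\<chi> j. v $ ei j)"
  have "cmat M *v V = mu *s V"
  proof (rule Finite_Cartesian_Product.vec_eq_iff[THEN iffD2], rule allI)
    fix j :: 'n
    have "(cmat M *v V) $ j = (\<Sum>l\<in>{0..<?d}. complex_of_real (M $ j $ e l) * V $ e l)"
      by (simp add: matrix_vector_mult_def cmat_def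
          sum_enumeration[of "\<lambda>l. complex_of_real (M $ j $ l) * V $ l"])
    also have "\<dots> = (jnf_of_mat e M *\<^sub>v v) $ ei j"
      using ei_less[of j] v(1)
      by (auto simp: scalar_prod_def jnf_of_mat_def V_def ei e_ei intro!: sum.cong)
    also have "\<dots> = (mu *s V) $ j" using v(3) ei_less[of j] v(1) by (simp add: V_def)
    finally show "(cmat M *v V) $ j = (mu *s V) $ j" .
  qed
  moreover have "V \<noteq> 0"
  proof
    assume "V = 0"
    have "v $ i = 0" if "i < ?d" for i
    proof -
      have "V $ e i = 0" using \<open>V = 0\<close> by simp
      then show ?thesis by (simp add: V_def ei that)
    qed
    then have "v = 0\<^sub>v ?d" using v(1) by (intro eq_vecI) auto
    with v(2) show False by simp
  qed
  ultimately show ?thesis using that by blast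
qed

lemma schur_spectral_radius_less_1:
  assumes "schur M"
  shows "spectral_radius (jnf_of_mat e M) < 1"
proof -
  obtain mu where mu: "eigenvalue (jnf_of_mat e M) mu" and rad: "spectral_radius (jnf_of_mat e M) = cmod mu"
    using spectral_radius_mem_max(1)[OF jnf_of_mat_carrier zero_less_card_finite] unfolding spectrum_def by auto
  obtain v where "v \<noteq> 0" "cmat M *v v = mu *s v"
    using eigenvalue_jnf_of_mat[OF mu] .
  then show ?thesis using assms rad unfolding schur_def by auto
qed

end

lemma schur_matpow_tendsto_zero:
  fixes M :: "real^'n^'n"
  assumes "schur M"
  shows "(\<lambda>k. matpow M k *v y) \<longlonglongrightarrow> 0"
proof -
  let ?d = "CARD('n)"
  obtain e :: "nat \<Rightarrow> 'n" where e: "bij_betw e {0..<?d} UNIV"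
    using ex_bij_betw_nat_finite[of "UNIV::'n set"] by auto
  obtain c s where s: "1 < s"
    and entry: "\<forall>k i j. i < ?d \<longrightarrow> j < ?d \<longrightarrow> cmod ((jnf_of_mat e M ^\<^sub>m k) $$ (i, j)) \<le> c / s ^ k"
    using spectral_radius_less_1_geometric_decay[OF jnf_of_mat_carrier zero_less_card_finite
        schur_spectral_radius_less_1[OF e assms]] by blast
  define Y where "Y = (\<Sum>j\<in>{0..<?d}. \<bar>y $ e j\<bar>)"
  have component: "\<bar>(matpow M k *v y) $ e i\<bar> \<le> c * (1 / s) ^ k * Y" if i: "i < ?d" for i k
  proof -
    have "complex_of_real ((matpow M k *v y) $ e i) = jnf_of_vec e (matpow M k *v y) $ i"
      using i by (simp add: jnf_of_vec_def)
    also have "\<dots> = (jnf_of_mat e M ^\<^sub>m k *\<^sub>v jnf_of_vec e y) $ i"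
      by (simp only: jnf_of_mat_pow_mult_vec[OF e])
    also have "\<dots> = (\<Sum>j\<in>{0..<?d}. (jnf_of_mat e M ^\<^sub>m k) $$ (i, j) * complex_of_real (y $ e j))"
      using i jnf_of_mat_carrier[of e M] by (simp add: scalar_prod_def jnf_of_vec_def)
    finally have eq: "complex_of_real ((matpow M k *v y) $ e i)
        = (\<Sum>j\<in>{0..<?d}. (jnf_of_mat e M ^\<^sub>m k) $$ (i, j) * complex_of_real (y $ e j))" .
    have "\<bar>(matpow M k *v y) $ e i\<bar> = cmod (complex_of_real ((matpow M k *v y) $ e i))"
      by simp
    also have "\<dots> \<le> (\<Sum>j\<in>{0..<?d}. cmod ((jnf_of_mat e M ^\<^sub>m k) $$ (i, j) * complex_of_real (y $ e j)))"
      unfolding eq by (rule norm_sum)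
    also have "\<dots> = (\<Sum>j\<in>{0..<?d}. cmod ((jnf_of_mat e M ^\<^sub>m k) $$ (i, j)) * \<bar>y $ e j\<bar>)"
      by (simp add: norm_mult)
    also have "\<dots> \<le> (\<Sum>j\<in>{0..<?d}. c / s ^ k * \<bar>y $ e j\<bar>)"
      using entry i by (intro sum_mono mult_right_mono) simp_all
    finally show ?thesis by (simp add: Y_def sum_distrib_left power_one_over)
  qed
  have bound: "norm (matpow M k *v y) \<le> real ?d * (c * (1 / s) ^ k * Y)" for k
  proof -
    have "norm (matpow M k *v y) \<le> (\<Sum>i\<in>{0..<?d}. \<bar>(matpow M k *v y) $ e i\<bar>)"
      using norm_le_l1_cart[of "matpow M k *v y"]
      by (simp only: sum_enumeration[OF e, of "\<lambda>i. \<bar>(matpow M k *v y) $ i\<bar>"])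
    also have "\<dots> \<le> (\<Sum>i\<in>{0..<?d}. c * (1 / s) ^ k * Y)"
      by (rule sum_mono) (simp add: component)
    finally show ?thesis by simp
  qed
  have "(\<lambda>k. real ?d * (c * (1 / s) ^ k * Y)) \<longlonglongrightarrow> 0"
    using s by (intro tendsto_mult_right_zero tendsto_mult_left_zero LIMSEQ_power_zero) simp
  then show ?thesis
    by (rule Lim_null_comparison[rotated]) (simp add: bound)
qed


section \<open>Zero-mean noise with given covariance\<close>

lemma bounded_linear_eq_inner_cart:
  fixes f :: "real^'n \<Rightarrow> real"
  assumes "bounded_linear f"
  shows "f w = (\<chi> i. f (axis i 1)) \<bullet> w"
proof -
  interpret f: bounded_linear f by fact
  have "(\<Sum>i\<in>UNIV. w $ i *\<^sub>R axis i 1) = w"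
    using basis_expansion[of w] by (simp add: scalar_mult_eq_scaleR)
  then have "f w = f (\<Sum>i\<in>UNIV. w $ i *\<^sub>R axis i 1)" by simp
  also have "\<dots> = (\<Sum>i\<in>UNIV. w $ i * f (axis i 1))"
    by (simp add: f.sum f.scale)
  also have "\<dots> = (\<chi> i. f (axis i 1)) \<bullet> w"
    by (simp add: inner_vec_def mult.commute)
  finally show ?thesis .
qed

lemma bounded_linear_inner_matrix_vector_mult:
  "bounded_linear (\<lambda>w. a \<bullet> ((M :: real^'n^'m) *v w))"
  by (rule bounded_linear_inner_right_comp[OF matrix_vector_mul_bounded_linear])

lemma bounded_linear_matrix_vector_mult_inner:
  "bounded_linear (\<lambda>w. ((M :: real^'n^'m) *v w) \<bullet> a)"
  by (rule bounded_linear_inner_left_comp[OF matrix_vector_mul_bounded_linear])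

locale centred_noise = prob_space D for D :: "(real^'n) measure" +
  fixes Sw :: "real^'n^'n"
  assumes sets_D: "sets D = sets borel"
    and integrable_component: "\<And>i. integrable D (\<lambda>w. w $ i)"
    and integrable_component_mult: "\<And>i j. integrable D (\<lambda>w. w $ i * w $ j)"
    and integral_component: "\<And>i. (\<integral>w. w $ i \<partial>D) = 0"
    and integral_component_mult: "\<And>i j. (\<integral>w. w $ i * w $ j \<partial>D) = Sw $ i $ j"
begin

lemma integrable_inner: "integrable D (\<lambda>w. c \<bullet> w)"
  unfolding inner_vec_def inner_real_def
  by (intro Bochner_Integration.integrable_sum Bochner_Integration.integrable_mult_right
      integrable_component)

lemma integral_inner: "(\<integral>w. c \<bullet> w \<partial>D) = 0"
  unfolding inner_vec_def inner_real_def
  by (subst Bochner_Integration.integral_sum)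
    (auto intro!: Bochner_Integration.integrable_mult_right simp: integrable_component integral_component)

lemma
  fixes f :: "real^'n \<Rightarrow> real"
  assumes "bounded_linear f"
  shows integrable_bounded_linear: "integrable D f"
    and integral_bounded_linear: "(\<integral>w. f w \<partial>D) = 0"
proof -
  have f: "f = (\<lambda>w. (\<chi> i. f (axis i 1)) \<bullet> w)"
    using bounded_linear_eq_inner_cart[OF assms] by blast
  show "integrable D f" by (subst f) (rule integrable_inner)
  show "(\<integral>w. f w \<partial>D) = 0" by (subst f) (rule integral_inner)
qed

lemma integrable_quad_form: "integrable D (quad_form S)"
  unfolding quad_form_eq_sum[abs_def]
  by (intro Bochner_Integration.integrable_sum Bochner_Integration.integrable_mult_right
      integrable_component_mult)

lemma integral_quad_form: "(\<integral>w. quad_form S w \<partial>D) = trace (S ** Sw)"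
proof -
  have Sw_sym: "Sw $ i $ j = Sw $ j $ i" for i j
    using integral_component_mult[of i j] integral_component_mult[of j i] by (simp add: mult.commute)
  have "(\<integral>w. quad_form S w \<partial>D) = (\<Sum>i\<in>UNIV. \<Sum>j\<in>UNIV. S $ i $ j * Sw $ i $ j)"
    unfolding quad_form_eq_sum
    by (simp add: Bochner_Integration.integral_sum Bochner_Integration.integrable_sum
        Bochner_Integration.integrable_mult_right integrable_component_mult integral_component_mult)
  also have "\<dots> = trace (S ** Sw)"
    unfolding trace_def matrix_matrix_mult_def by (simp add: Sw_sym)
  finally show ?thesis .
qed

end


section \<open>The shifted candidate\<close>

locale tube_mpc = centred_noise D Sw
  for D :: "(real^'n) measure" and Sw :: "real^'n^'n" +
  fixes A :: "real^'n^'n" and B :: "real^'m^'n" and K :: "real^'n^'m"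
    and Q :: "real^'n^'n" and q :: "real^'n" and R :: "real^'m^'m" and r :: "real^'m"
    and Pf :: "real^'n^'n" and pf :: "real^'n"
    and Zb :: "nat \<Rightarrow> ((real^'n) \<times> (real^'m)) set" and Xf :: "(real^'n) set"
    and N :: nat and x0 :: "real^'n"
    and sol :: "nat \<Rightarrow> real^'n \<Rightarrow> real^'n \<Rightarrow> ((nat \<Rightarrow> real^'n) \<times> (nat \<Rightarrow> real^'m) \<times> real)"
  assumes N_pos: "1 \<le> N"
    and schur_AK: "schur (A + B ** K)"
    and Q_psd: "psd_mat Q" and R_psd: "psd_mat R"
    and Xf_Zb: "\<And>z k. z \<in> Xf \<Longrightarrow> (z, K *v z) \<in> Zb k"
    and Xf_inv: "\<And>z. z \<in> Xf \<Longrightarrow> (A + B ** K) *v z \<in> Xf"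
    and Vf_decr: "\<And>y. term_cost Pf pf ((A + B ** K) *v y)
                        = term_cost Pf pf y - stage_cost Q q R r y (K *v y)"
    and feas0: "\<exists>d. feasible N A B Zb Xf 0 x0 x0 d"
    and sol_min: "\<And>k y zp. (\<exists>d. feasible N A B Zb Xf k y zp d) \<Longrightarrow>
        is_minimizer N A B K Q q R r Pf pf Sw Zb Xf k y zp (sol k y zp)"
    and sol_meas: "\<And>k i.
        (\<lambda>p. fst (sol k (fst p) (snd p)) i) \<in> borel_measurable borel \<and>
        (\<lambda>p. fst (snd (sol k (fst p) (snd p))) i) \<in> borel_measurable borel \<and>
        (\<lambda>p. snd (snd (sol k (fst p) (snd p)))) \<in> borel_measurable borel"
begin

abbreviation "ell \<equiv> stage_cost Q q R r"
abbreviation "Vf \<equiv> term_cost Pf pf"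
abbreviation "AK \<equiv> A + B ** K"
abbreviation "cost \<equiv> cost_JN N A B K Q q R r Pf pf Sw"
abbreviation "feas \<equiv> feasible N A B Zb Xf"
abbreviation "minimizer \<equiv> is_minimizer N A B K Q q R r Pf pf Sw Zb Xf"
abbreviation "J \<equiv> opt_val N A B K Q q R r Pf pf Sw Zb Xf"
abbreviation "cl \<equiv> closed_loop A B K sol x0"
abbreviation "ms \<equiv> mean_state A B K"
abbreviation "mi \<equiv> mean_input A B K"
abbreviation "J_cl k om \<equiv> J k (fst (cl om k)) (snd (cl om k))"
abbreviation "ell_cl k om \<equiv> ell (fst (cl om k)) (cl_input K sol k (cl om k))"

definition cov_cost :: real where
  "cov_cost = (\<Sum>i<N. trace ((Q + transpose K ** R ** K) ** state_cov AK Sw i))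
        + trace (Pf ** state_cov AK Sw N)"

text \<open>The shifted tube meets the initial constraint of the next problem with \<open>\<lambda> = 0\<close>, whatever
  the next state turns out to be.\<close>
definition shifted_tube :: "(nat \<Rightarrow> real^'n) \<Rightarrow> nat \<Rightarrow> real^'n" where
  "shifted_tube z i = (if i < N then z (Suc i) else AK *v z N)"

definition shifted_input :: "(nat \<Rightarrow> real^'n) \<Rightarrow> (nat \<Rightarrow> real^'m) \<Rightarrow> nat \<Rightarrow> real^'m" where
  "shifted_input z v i = (if Suc i < N then v (Suc i) else K *v z N)"

lemma AK_mult_vec: "AK *v y = A *v y + B *v (K *v y)"
  by (simp add: matrix_vector_mult_add_rdistrib matrix_vector_mul_assoc)

lemma cost_JN_eq: "cost x (z, v, lam) =
   (\<Sum>i<N. ell (ms x z v i) (mi x z v i)) + Vf (ms x z v N) + cov_cost"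
  by (simp add: cost_JN_def cov_cost_def)

lemma feasible_shifted:
  assumes "feas k x zp (z, v, lam)"
  shows "feas (Suc k) x' (z 1) (shifted_tube z, shifted_input z v, 0)"
proof -
  from assms have dyn: "\<forall>i<N. z (Suc i) = A *v z i + B *v v i"
    and con: "\<forall>i<N. (z i, v i) \<in> Zb (k + i)" and z_N: "z N \<in> Xf"
    unfolding feasible_def by auto
  have "shifted_tube z (Suc i) = A *v shifted_tube z i + B *v shifted_input z v i
      \<and> (shifted_tube z i, shifted_input z v i) \<in> Zb (Suc k + i)" if "i < N" for i
  proof (cases "Suc i < N")
    case True
    then show ?thesis using dyn con that by (auto simp: shifted_tube_def shifted_input_def)
  next
    case False
    then have "Suc i = N" using that Suc_lessI by blast
    then show ?thesis using Xf_Zb[OF z_N] by (simp add: shifted_tube_def shifted_input_def AK_mult_vec)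
  qed
  moreover have "shifted_tube z 0 = z 1" and "shifted_tube z N \<in> Xf"
    using N_pos Xf_inv[OF z_N] by (auto simp: shifted_tube_def)
  ultimately show ?thesis unfolding feasible_def by simp
qed

lemma mean_state_Suc_eq: "ms x z v (Suc i) = A *v ms x z v i + B *v (v i + K *v (ms x z v i - z i))"
  by (simp add: Let_def)

declare mean_state.simps(2)[simp del]

lemma mean_state_shifted:
  assumes m: "N = Suc m"
  shows "i \<le> m \<Longrightarrow> ms (ms x z v 1 + w) (shifted_tube z) (shifted_input z v) i
      = ms x z v (Suc i) + matpow AK i *v w"
proof (induction i)
  case (Suc i)
  then have i: "Suc i < N" "i < N" using m by auto
  have IH: "ms (ms x z v 1 + w) (shifted_tube z) (shifted_input z v) i = ms x z v (Suc i) + matpow AK i *v w"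
    using Suc by simp
  have "ms (ms x z v 1 + w) (shifted_tube z) (shifted_input z v) (Suc i)
      = A *v (ms x z v (Suc i) + matpow AK i *v w)
        + B *v (v (Suc i) + K *v (ms x z v (Suc i) + matpow AK i *v w - z (Suc i)))"
    by (simp only: mean_state_Suc_eq[of "ms x z v 1 + w"] IH) (simp add: shifted_tube_def shifted_input_def i)
  also have "\<dots> = ms x z v (Suc (Suc i)) + matpow AK (Suc i) *v w"
    by (simp only: mean_state_Suc_eq[of x z v "Suc i"] matpow_Suc_mult_vec AK_mult_vec
        matrix_vector_right_distrib matrix_vector_mult_diff_distrib) (simp add: algebra_simps)
  finally show ?case .
qed simp

lemma mean_state_shifted_last:
  assumes "N = Suc m"
  shows "ms x' (shifted_tube z) (shifted_input z v) N = AK *v ms x' (shifted_tube z) (shifted_input z v) m"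
proof -
  have "m < N" "\<not> Suc m < N" "z (Suc m) = z N" using assms by auto
  then show ?thesis
    by (simp add: assms[symmetric] mean_state_Suc_eq[of x' _ _ m, unfolded assms[symmetric]]
        shifted_tube_def shifted_input_def AK_mult_vec matrix_vector_right_distrib
        matrix_vector_mult_diff_distrib)
qed

lemma mean_input_shifted:
  assumes m: "N = Suc m" and i: "i < m"
  shows "mi (ms x z v 1 + w) (shifted_tube z) (shifted_input z v) i
      = mi x z v (Suc i) + K *v (matpow AK i *v w)"
proof -
  have "Suc i < N" "i < N" using m i by auto
  then show ?thesis
    using mean_state_shifted[OF m, of i x z v w] i
    by (simp add: mean_input_def shifted_tube_def shifted_input_def matrix_vector_right_distrib
        matrix_vector_mult_diff_distrib algebra_simps del: matpow.simps)
qed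

lemma mean_input_shifted_last:
  assumes "N = Suc m"
  shows "mi x' (shifted_tube z) (shifted_input z v) m = K *v ms x' (shifted_tube z) (shifted_input z v) m"
proof -
  have "m < N" "\<not> Suc m < N" "z (Suc m) = z N" using assms by auto
  then show ?thesis
    by (simp add: mean_input_def shifted_tube_def shifted_input_def matrix_vector_right_distrib
        matrix_vector_mult_diff_distrib)
qed

text \<open>The terminal stage of the candidate is absorbed by the terminal cost decrease.\<close>
lemma cost_shifted:
  assumes m: "N = Suc m"
  shows "cost (ms x z v 1 + w) (shifted_tube z, shifted_input z v, 0) =
     (\<Sum>i<m. ell (ms x z v (Suc i) + matpow AK i *v w) (mi x z v (Suc i) + K *v (matpow AK i *v w)))
     + Vf (ms x z v N + matpow AK m *v w) + cov_cost"
proof -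
  let ?x' = "ms x z v 1 + w"
  let ?ms = "ms ?x' (shifted_tube z) (shifted_input z v)"
  let ?mi = "mi ?x' (shifted_tube z) (shifted_input z v)"
  have "(\<Sum>i<m. ell (?ms i) (?mi i)) =
     (\<Sum>i<m. ell (ms x z v (Suc i) + matpow AK i *v w) (mi x z v (Suc i) + K *v (matpow AK i *v w)))"
    using mean_state_shifted[OF m] mean_input_shifted[OF m] by (intro sum.cong) (simp_all del: matpow.simps)
  moreover have "?ms m = ms x z v N + matpow AK m *v w"
    using mean_state_shifted[OF m, of m] m by simp
  moreover have "(\<Sum>i<N. ell (?ms i) (?mi i)) = (\<Sum>i<m. ell (?ms i) (?mi i)) + ell (?ms m) (?mi m)"
    using m by simp
  moreover have "cost ?x' (shifted_tube z, shifted_input z v, 0)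
      = (\<Sum>i<N. ell (?ms i) (?mi i)) + Vf (AK *v ?ms m) + cov_cost"
    unfolding cost_JN_eq mean_state_shifted_last[OF m] ..
  ultimately show ?thesis
    using Vf_decr[of "?ms m"] by (simp add: mean_input_shifted_last[OF m])
qed

lemma cost_JN_split_first:
  assumes "N = Suc m"
  shows "cost x (z, v, lam) = ell x (mi x z v 0)
     + (\<Sum>i<m. ell (ms x z v (Suc i)) (mi x z v (Suc i))) + Vf (ms x z v N) + cov_cost"
proof -
  have "(\<Sum>i<N. ell (ms x z v i) (mi x z v i))
      = ell x (mi x z v 0) + (\<Sum>i<m. ell (ms x z v (Suc i)) (mi x z v (Suc i)))"
    unfolding assms sum.lessThan_Suc_shift by simp
  then show ?thesis unfolding cost_JN_eq by simp
qed

lemma terminal_quad_decrease: "quad_form Pf (AK *v y) = quad_form Pf y - (quad_form Q y + quad_form R (K *v y))"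
  using Vf_decr[of y] Vf_decr[of "- y"]
  by (simp add: term_cost_eq_quad_form stage_cost_eq_quad_form matrix_vector_mult_uminus)

lemma quad_form_telescope:
  "(\<Sum>i<m. quad_form Q (matpow AK i *v w) + quad_form R (K *v (matpow AK i *v w)))
     + quad_form Pf (matpow AK m *v w) = quad_form Pf w"
proof (induction m)
  case (Suc m)
  then show ?case
    using terminal_quad_decrease[of "matpow AK m *v w"] by (simp add: matpow_Suc_mult_vec del: matpow.simps)
qed simp

text \<open>The cross terms between the nominal prediction and the noise are linear in \<open>w\<close>, and the
  quadratic terms telescope to \<open>w\<^sup>T P\<^sub>f w\<close>.\<close>
lemma cost_shifted_eq:
  assumes m: "N = Suc m"
  obtains L where "bounded_linear L"
    and "\<And>w. cost (ms x z v 1 + w) (shifted_tube z, shifted_input z v, 0)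
            = cost x (z, v, lam) - ell x (mi x z v 0) + L w + quad_form Pf w"
proof -
  let ?P = "\<lambda>i w. matpow AK i *v w"
  let ?xs = "ms x z v" and ?us = "mi x z v"
  define L where "L = (\<lambda>w. (\<Sum>i<m. ?xs (Suc i) \<bullet> (Q *v ?P i w) + ?P i w \<bullet> (Q *v ?xs (Suc i))
      + ?P i w \<bullet> q + ?us (Suc i) \<bullet> (R *v (K *v ?P i w)) + (K *v ?P i w) \<bullet> (R *v ?us (Suc i))
      + (K *v ?P i w) \<bullet> r)
    + (?xs N \<bullet> (Pf *v ?P m w) + ?P m w \<bullet> (Pf *v ?xs N) + pf \<bullet> ?P m w))"
  have "bounded_linear L"
    unfolding L_def matrix_vector_mul_assoc
    by (intro bounded_linear_add bounded_linear_sum bounded_linear_inner_matrix_vector_mult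
        bounded_linear_matrix_vector_mult_inner)
  moreover have "cost (?xs 1 + w) (shifted_tube z, shifted_input z v, 0)
      = cost x (z, v, lam) - ell x (?us 0) + L w + quad_form Pf w" for w
  proof -
    have stages: "(\<Sum>i<m. ell (?xs (Suc i) + ?P i w) (?us (Suc i) + K *v ?P i w))
      = (\<Sum>i<m. ell (?xs (Suc i)) (?us (Suc i)))
        + (\<Sum>i<m. ?xs (Suc i) \<bullet> (Q *v ?P i w) + ?P i w \<bullet> (Q *v ?xs (Suc i))
            + ?P i w \<bullet> q + ?us (Suc i) \<bullet> (R *v (K *v ?P i w)) + (K *v ?P i w) \<bullet> (R *v ?us (Suc i))
            + (K *v ?P i w) \<bullet> r)
        + (\<Sum>i<m. quad_form Q (?P i w) + quad_form R (K *v ?P i w))"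
      by (simp only: stage_cost_add sum.distrib)
    show ?thesis
      unfolding cost_shifted[OF m] unfolding cost_JN_split_first[OF m] stages term_cost_add L_def
      using quad_form_telescope[where m = m and w = w] by linarith
  qed
  ultimately show ?thesis by (rule that)
qed

end

section \<open>One step of the closed loop\<close>

lemma opt_val_eq_cost:
  assumes "is_minimizer N A B K Q q R r Pf pf Sw Zb Xf k x zp d"
  shows "opt_val N A B K Q q R r Pf pf Sw Zb Xf k x zp = cost_JN N A B K Q q R r Pf pf Sw x d"
proof -
  obtain z v lam where d: "d = (z, v, lam)" by (cases d) auto
  from assms have "cost_JN N A B K Q q R r Pf pf Sw x d
      \<in> {cost_JN N A B K Q q R r Pf pf Sw x d | d. feasible N A B Zb Xf k x zp d}"
    and "\<And>c. c \<in> {cost_JN N A B K Q q R r Pf pf Sw x d | d. feasible N A B Zb Xf k x zp d}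
        \<Longrightarrow> cost_JN N A B K Q q R r Pf pf Sw x d \<le> c"
    unfolding is_minimizer_def by (auto simp: d)
  then show ?thesis unfolding opt_val_def by (rule cInf_eq_minimum)
qed

lemma opt_val_le_cost:
  assumes "is_minimizer N A B K Q q R r Pf pf Sw Zb Xf k x zp d" and "feasible N A B Zb Xf k x zp d'"
  shows "opt_val N A B K Q q R r Pf pf Sw Zb Xf k x zp \<le> cost_JN N A B K Q q R r Pf pf Sw x d'"
proof -
  have "cost_JN N A B K Q q R r Pf pf Sw x d \<le> cost_JN N A B K Q q R r Pf pf Sw x d'"
    using assms unfolding is_minimizer_def by blast
  then show ?thesis using opt_val_eq_cost[OF assms(1)] by simp
qed

lemma closed_loop_cong:
  "(\<And>j. j < k \<Longrightarrow> om j = om' j) \<Longrightarrow> closed_loop A B K sol x0 om k = closed_loop A B K sol x0 om' k"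
  by (induction k) (simp_all add: Let_def)

lemma closed_loop_fun_upd: "closed_loop A B K sol x0 (om(k := w)) k = closed_loop A B K sol x0 om k"
  by (rule closed_loop_cong) simp

context tube_mpc
begin

lemma closed_loop_feasible: "\<exists>d. feas k (fst (cl om k)) (snd (cl om k)) d"
proof (induction k)
  case 0 then show ?case using feas0 by simp
next
  case (Suc k)
  let ?s = "cl om k"
  obtain z v lam where d: "sol k (fst ?s) (snd ?s) = (z, v, lam)" by (cases "sol k (fst ?s) (snd ?s)")
  with sol_min[OF Suc.IH] have "feas k (fst ?s) (snd ?s) (z, v, lam)"
    unfolding is_minimizer_def by simp
  from feasible_shifted[OF this]
  have "feas (Suc k) (fst (cl om (Suc k))) (snd (cl om (Suc k))) (shifted_tube z, shifted_input z v, 0)"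
    using d by (simp add: Let_def)
  then show ?case by blast
qed

lemma closed_loop_minimizer:
  "minimizer k (fst (cl om k)) (snd (cl om k)) (sol k (fst (cl om k)) (snd (cl om k)))"
  by (rule sol_min[OF closed_loop_feasible])

lemma opt_val_closed_loop:
  "J_cl k om = cost (fst (cl om k)) (sol k (fst (cl om k)) (snd (cl om k)))"
  by (rule opt_val_eq_cost[OF closed_loop_minimizer])

lemma closed_loop_Suc_fun_upd:
  assumes "sol k (fst (cl om k)) (snd (cl om k)) = (z, v, lam)"
  shows "cl (om(k := w)) (Suc k) = (ms (fst (cl om k)) z v 1 + w, z 1)"
    and "cl_input K sol k (cl om k) = mi (fst (cl om k)) z v 0"
  using assms closed_loop_fun_upd[of A B K sol x0 om k w]
  by (simp_all add: Let_def cl_input_def mean_state_Suc_eq mean_input_def)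

lemma opt_val_Suc_le_shifted:
  assumes d: "sol k (fst (cl om k)) (snd (cl om k)) = (z, v, lam)"
  shows "J_cl (Suc k) (om(k := w))
    \<le> cost (ms (fst (cl om k)) z v 1 + w) (shifted_tube z, shifted_input z v, 0)"
proof -
  let ?x = "fst (cl om k)"
  have "feas k ?x (snd (cl om k)) (z, v, lam)"
    using closed_loop_minimizer[of k om] unfolding d is_minimizer_def by simp
  then have feas_Suc: "feas (Suc k) (ms ?x z v 1 + w) (z 1) (shifted_tube z, shifted_input z v, 0)"
    by (rule feasible_shifted)
  have "J (Suc k) (ms ?x z v 1 + w) (z 1) \<le> cost (ms ?x z v 1 + w) (shifted_tube z, shifted_input z v, 0)"
    by (rule opt_val_le_cost[OF sol_min feas_Suc]) (use feas_Suc in blast)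
  then show ?thesis unfolding closed_loop_Suc_fun_upd[OF d] by simp
qed

lemma opt_val_Suc_le:
  obtains L where "bounded_linear L"
    and "\<And>w. J_cl (Suc k) (om(k := w)) \<le> J_cl k om - ell_cl k om + L w + quad_form Pf w"
proof -
  obtain m where m: "N = Suc m" using N_pos by (cases N) auto
  let ?x = "fst (cl om k)"
  obtain z v lam where d: "sol k ?x (snd (cl om k)) = (z, v, lam)"
    by (cases "sol k ?x (snd (cl om k))")
  obtain L where "bounded_linear L"
    and "\<And>w. cost (ms ?x z v 1 + w) (shifted_tube z, shifted_input z v, 0)
            = cost ?x (z, v, lam) - ell ?x (mi ?x z v 0) + L w + quad_form Pf w"
    using cost_shifted_eq[OF m] by blast
  moreover note opt_val_Suc_le_shifted[OF d] opt_val_closed_loop[of k om]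
  ultimately show ?thesis
    using that by (simp add: closed_loop_Suc_fun_upd(2)[OF d] d)
qed

lemma expected_opt_val_decrease:
  assumes "integrable D (\<lambda>w. J_cl (k + 1) (om(k := w)) - J_cl k om)"
  shows "(\<integral>w. J_cl (k + 1) (om(k := w)) - J_cl k om \<partial>D) \<le> - ell_cl k om + trace (Pf ** Sw)"
proof -
  let ?e = "- ell_cl k om"
  obtain L where L: "bounded_linear L"
    and le: "\<And>w. J_cl (Suc k) (om(k := w)) \<le> J_cl k om - ell_cl k om + L w + quad_form Pf w"
    using opt_val_Suc_le[where k = k and om = om] by blast
  have bound: "integrable D (\<lambda>w. ?e + L w + quad_form Pf w)"
    by (intro Bochner_Integration.integrable_add integrable_bounded_linear[OF L] integrable_quad_form
        integrable_const)
  have "(\<integral>w. J_cl (k + 1) (om(k := w)) - J_cl k om \<partial>D) \<le> (\<integral>w. ?e + L w + quad_form Pf w \<partial>D)"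
    using le by (intro integral_mono[OF assms bound]) (simp add: algebra_simps)
  also have "\<dots> = ?e + trace (Pf ** Sw)"
    using integral_bounded_linear[OF L] integrable_bounded_linear[OF L]
    by (simp add: integrable_quad_form integral_quad_form prob_space)
  finally show ?thesis .
qed

end

section \<open>Consequences of a stage cost bounded below\<close>

context tube_mpc
begin

lemma quad_form_Pf_nonneg: "0 \<le> quad_form Pf y"
proof -
  have "quad_form Pf (matpow AK n *v y) \<le> quad_form Pf y" for n
  proof -
    have "0 \<le> (\<Sum>i<n. quad_form Q (matpow AK i *v y) + quad_form R (K *v (matpow AK i *v y)))"
      by (intro sum_nonneg add_nonneg_nonneg psd_mat_quad_form_nonneg Q_psd R_psd)
    then show ?thesis using quad_form_telescope[where m = n and w = y] by linarith
  qed
  then show ?thesis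
    by (intro LIMSEQ_le_const2[OF tendsto_quad_form_zero[OF schur_matpow_tendsto_zero[OF schur_AK]]])
      auto
qed

lemma quad_form_Pf_null_trajectory:
  assumes "quad_form Pf z = 0"
  shows "quad_form Q (matpow AK i *v z) = 0 \<and> quad_form R (K *v (matpow AK i *v z)) = 0"
proof -
  let ?g = "\<lambda>j. quad_form Q (matpow AK j *v z) + quad_form R (K *v (matpow AK j *v z))"
  have nonneg: "0 \<le> ?g j" for j
    by (intro add_nonneg_nonneg psd_mat_quad_form_nonneg Q_psd R_psd)
  have "0 \<le> (\<Sum>j<Suc i. ?g j)" by (intro sum_nonneg nonneg)
  then have "(\<Sum>j<Suc i. ?g j) = 0"
    using quad_form_telescope[where m = "Suc i" and w = z] assms
      quad_form_Pf_nonneg[of "matpow AK (Suc i) *v z"] by linarith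
  then have "\<forall>j\<in>{..<Suc i}. ?g j = 0"
    by (subst (asm) sum_nonneg_eq_0_iff) (simp_all add: nonneg)
  then have "?g i = 0" by simp
  then show ?thesis
    using psd_mat_quad_form_nonneg[OF Q_psd, of "matpow AK i *v z"]
      psd_mat_quad_form_nonneg[OF R_psd, of "K *v (matpow AK i *v z)"] by linarith
qed

lemma terminal_linear_decrease: "pf \<bullet> (AK *v y) = pf \<bullet> y - (y \<bullet> q + (K *v y) \<bullet> r)"
  using Vf_decr[of y] Vf_decr[of "- y"]
  by (simp add: term_cost_eq_quad_form stage_cost_eq_quad_form matrix_vector_mult_uminus)

lemma inner_pf_telescope:
  "pf \<bullet> y = (\<Sum>i<n. (matpow AK i *v y) \<bullet> q + (K *v (matpow AK i *v y)) \<bullet> r) + pf \<bullet> (matpow AK n *v y)"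
proof (induction n)
  case (Suc n)
  then show ?case
    using terminal_linear_decrease[of "matpow AK n *v y"] by (simp add: matpow_Suc_mult_vec del: matpow.simps)
qed simp

context
  fixes c0 :: real
  assumes ell_lower: "\<And>y u. c0 \<le> ell y u"
begin

text \<open>Along a direction where the quadratic part of the stage cost vanishes, a nonzero linear
  part would push it below \<open>c0\<close>.\<close>
lemma inner_q_null: "quad_form Q y = 0 \<Longrightarrow> y \<bullet> q = 0"
proof (rule ccontr)
  assume null: "quad_form Q y = 0" and ne: "y \<bullet> q \<noteq> 0"
  have "ell (((c0 - 1) / (y \<bullet> q)) *\<^sub>R y) 0 = c0 - 1"
    using null ne by (simp add: stage_cost_eq_quad_form quad_form_scaleR)
  then show False using ell_lower[of "((c0 - 1) / (y \<bullet> q)) *\<^sub>R y" 0] by simp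
qed

lemma inner_r_null: "quad_form R u = 0 \<Longrightarrow> u \<bullet> r = 0"
proof (rule ccontr)
  assume null: "quad_form R u = 0" and ne: "u \<bullet> r \<noteq> 0"
  have "ell 0 (((c0 - 1) / (u \<bullet> r)) *\<^sub>R u) = c0 - 1"
    using null ne by (simp add: stage_cost_eq_quad_form quad_form_scaleR)
  then show False using ell_lower[of 0 "((c0 - 1) / (u \<bullet> r)) *\<^sub>R u"] by simp
qed

text \<open>On the null space of \<open>P\<^sub>f\<close> the linear terms telescope to zero, and the remainder
  \<open>p\<^sub>f\<^sup>T A\<^sub>K\<^sup>n z\<close> vanishes in the limit.\<close>
lemma inner_pf_null:
  assumes "quad_form Pf z = 0"
  shows "pf \<bullet> z = 0"
proof -
  have "pf \<bullet> z = pf \<bullet> (matpow AK n *v z)" for n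
    using inner_pf_telescope[of z n] quad_form_Pf_null_trajectory[OF assms] inner_q_null inner_r_null
    by simp
  moreover have "(\<lambda>n. pf \<bullet> (matpow AK n *v z)) \<longlonglongrightarrow> pf \<bullet> 0"
    by (intro tendsto_inner tendsto_const schur_matpow_tendsto_zero[OF schur_AK])
  ultimately show ?thesis using LIMSEQ_unique by fastforce
qed

lemma term_cost_bounded_below: obtains c where "\<And>y. c \<le> Vf y"
  using quad_form_plus_inner_bounded_below[OF quad_form_Pf_nonneg inner_pf_null]
  by (metis term_cost_eq_quad_form)

end

definition noise_penalty :: "real^'n \<Rightarrow> real" where
  "noise_penalty w =
    (\<Sum>i<N - 1. 2 * (quad_form Q (matpow AK i *v w) + quad_form R (K *v (matpow AK i *v w)))
        + (matpow AK i *v w) \<bullet> q + (K *v (matpow AK i *v w)) \<bullet> r)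
    + 2 * quad_form Pf (matpow AK (N - 1) *v w) + (matpow AK (N - 1) *v w) \<bullet> pf"

lemma integrable_noise_penalty: "integrable D noise_penalty"
  unfolding noise_penalty_def[abs_def] matrix_vector_mul_assoc quad_form_matrix_vector_mult
  by (intro Bochner_Integration.integrable_add Bochner_Integration.integrable_sum
      Bochner_Integration.integrable_mult_right integrable_quad_form integrable_bounded_linear
      bounded_linear_matrix_vector_mult_inner)

context
  fixes c0 Vm :: real
  assumes ell_lower: "\<And>y u. c0 \<le> ell y u" and Vf_lower: "\<And>y. Vm \<le> Vf y"
begin

lemma stage_cost_add_le:
  "ell (y + a) (u + b)
    \<le> 3 * ell y u - 4 * c0 + (2 * (quad_form Q a + quad_form R b) + a \<bullet> q + b \<bullet> r)"
proof -
  have "c0 \<le> ell ((1/2) *\<^sub>R y) ((1/2) *\<^sub>R u)" by (rule ell_lower)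
  then have half: "quad_form Q y + quad_form R u \<le> 2 * ell y u - 4 * c0"
    by (simp add: stage_cost_eq_quad_form quad_form_scaleR power2_eq_square)
  show ?thesis
    using half quad_form_add_le[OF psd_mat_quad_form_nonneg[OF Q_psd], of y a]
      quad_form_add_le[OF psd_mat_quad_form_nonneg[OF R_psd], of u b]
    by (simp add: stage_cost_eq_quad_form inner_add_left)
qed

lemma term_cost_add_le: "Vf (y + a) \<le> 3 * Vf y - 4 * Vm + (2 * quad_form Pf a + a \<bullet> pf)"
proof -
  have "Vm \<le> Vf ((1/2) *\<^sub>R y)" by (rule Vf_lower)
  then have half: "quad_form Pf y \<le> 2 * Vf y - 4 * Vm"
    by (simp add: term_cost_eq_quad_form quad_form_scaleR power2_eq_square)
  show ?thesis
    using half quad_form_add_le[OF quad_form_Pf_nonneg, of y a]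
    by (simp add: term_cost_eq_quad_form inner_add_right inner_commute)
qed

lemma cost_JN_ge: "real N * c0 + Vm + cov_cost \<le> cost x (z, v, lam)"
proof -
  have "(\<Sum>i<N. c0) \<le> (\<Sum>i<N. ell (ms x z v i) (mi x z v i))"
    by (intro sum_mono ell_lower)
  then show ?thesis unfolding cost_JN_eq using Vf_lower[of "ms x z v N"] by simp
qed

lemma cost_JN_ge_first: "ell x (mi x z v 0) + real (N - 1) * c0 + Vm + cov_cost \<le> cost x (z, v, lam)"
proof -
  obtain m where m: "N = Suc m" using N_pos by (cases N) auto
  have "(\<Sum>i<m. c0) \<le> (\<Sum>i<m. ell (ms x z v (Suc i)) (mi x z v (Suc i)))"
    by (intro sum_mono ell_lower)
  then show ?thesis unfolding cost_JN_split_first[OF m] using Vf_lower[of "ms x z v N"] m by simp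
qed

lemma opt_val_closed_loop_ge: "real N * c0 + Vm + cov_cost \<le> J_cl k om"
  using opt_val_closed_loop[of k om] cost_JN_ge
  by (cases "sol k (fst (cl om k)) (snd (cl om k))") simp

lemma stage_cost_closed_loop_le: "ell_cl k om \<le> J_cl k om - real (N - 1) * c0 - Vm - cov_cost"
proof -
  obtain z v lam where d: "sol k (fst (cl om k)) (snd (cl om k)) = (z, v, lam)"
    by (cases "sol k (fst (cl om k)) (snd (cl om k))")
  show ?thesis
    using opt_val_closed_loop[of k om] cost_JN_ge_first[of "fst (cl om k)" z v lam]
    by (simp add: d closed_loop_Suc_fun_upd(2)[OF d])
qed

text \<open>In \<open>opt_val_Suc_le\<close> the linear term depends on the past of the closed loop. Here the noise
  enters through a fixed function, which makes \<open>J\<^sup>*\<close> integrable along the closed loop.\<close>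
lemma opt_val_Suc_crude_le:
  "J_cl (Suc k) (om(k := w))
    \<le> 3 * J_cl k om + noise_penalty w - 3 * c0 - 2 * cov_cost - 4 * c0 * real (N - 1) - 4 * Vm"
proof -
  obtain m where m: "N = Suc m" using N_pos by (cases N) auto
  let ?x = "fst (cl om k)"
  obtain z v lam where d: "sol k ?x (snd (cl om k)) = (z, v, lam)"
    by (cases "sol k ?x (snd (cl om k))")
  let ?xs = "ms ?x z v" and ?us = "mi ?x z v" and ?P = "\<lambda>i. matpow AK i *v w"
  let ?pen = "\<lambda>i. 2 * (quad_form Q (?P i) + quad_form R (K *v ?P i)) + ?P i \<bullet> q + (K *v ?P i) \<bullet> r"
  have "(\<Sum>i<m. ell (?xs (Suc i) + ?P i) (?us (Suc i) + K *v ?P i))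
     \<le> (\<Sum>i<m. 3 * ell (?xs (Suc i)) (?us (Suc i)) - 4 * c0 + ?pen i)"
    by (intro sum_mono stage_cost_add_le)
  also have "\<dots> = 3 * (\<Sum>i<m. ell (?xs (Suc i)) (?us (Suc i))) - 4 * c0 * real m + (\<Sum>i<m. ?pen i)"
    by (simp add: sum.distrib sum_subtractf sum_distrib_left)
  finally have stages: "(\<Sum>i<m. ell (?xs (Suc i) + ?P i) (?us (Suc i) + K *v ?P i))
     \<le> 3 * (\<Sum>i<m. ell (?xs (Suc i)) (?us (Suc i))) - 4 * c0 * real m + (\<Sum>i<m. ?pen i)" .
  have "noise_penalty w = (\<Sum>i<m. ?pen i) + (2 * quad_form Pf (?P m) + ?P m \<bullet> pf)"
    unfolding noise_penalty_def using m by simp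
  moreover have "J k ?x (snd (cl om k))
      = ell ?x (?us 0) + (\<Sum>i<m. ell (?xs (Suc i)) (?us (Suc i))) + Vf (?xs N) + cov_cost"
    using opt_val_closed_loop[of k om] unfolding d cost_JN_split_first[OF m] .
  moreover have "N - 1 = m" using m by simp
  ultimately show ?thesis
    unfolding \<open>N - 1 = m\<close>
    using opt_val_Suc_le_shifted[OF d, of w] cost_shifted[OF m, of ?x z v w] stages
      term_cost_add_le[of "?xs N" "?P m"] ell_lower[of ?x "?us 0"]
    by linarith
qed

end

end

section \<open>Measurability along the closed loop\<close>

lemma borel_measurable_matrix_vector_mult [measurable (raw)]:
  fixes M :: "real^'a^'b"
  shows "f \<in> borel_measurable F \<Longrightarrow> (\<lambda>x. M *v f x) \<in> borel_measurable F"
  by (rule borel_measurable_continuous_on[OF bounded_linear.continuous_on[OF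
        matrix_vector_mul_bounded_linear continuous_on_id]])

lemma borel_measurable_fst' [measurable]:
  "(\<lambda>p::'a::topological_space \<times> 'b::topological_space. fst p) \<in> borel_measurable borel"
  by (rule borel_measurable_continuous_onI) (intro continuous_on_fst continuous_on_id)

lemma borel_measurable_snd' [measurable]:
  "(\<lambda>p::'a::topological_space \<times> 'b::topological_space. snd p) \<in> borel_measurable borel"
  by (rule borel_measurable_continuous_onI) (intro continuous_on_snd continuous_on_id)

lemma borel_measurable_stage_cost [measurable (raw)]:
  assumes [measurable]: "f \<in> borel_measurable F" "g \<in> borel_measurable F"
  shows "(\<lambda>x. stage_cost Q q R r (f x) (g x)) \<in> borel_measurable F"
  unfolding stage_cost_def by measurable

lemma borel_measurable_term_cost [measurable (raw)]:
  assumes [measurable]: "f \<in> borel_measurable F"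
  shows "(\<lambda>x. term_cost Pf pf (f x)) \<in> borel_measurable F"
  unfolding term_cost_def by measurable

context tube_mpc
begin

abbreviation "noise_space \<equiv> PiM UNIV (\<lambda>_::nat. D)"

definition sol_tube :: "nat \<Rightarrow> (real^'n) \<times> (real^'n) \<Rightarrow> nat \<Rightarrow> real^'n" where
  "sol_tube k p = fst (sol k (fst p) (snd p))"

definition sol_input :: "nat \<Rightarrow> (real^'n) \<times> (real^'n) \<Rightarrow> nat \<Rightarrow> real^'m" where
  "sol_input k p = fst (snd (sol k (fst p) (snd p)))"

lemma borel_measurable_sol_tube [measurable]: "(\<lambda>p. sol_tube k p i) \<in> borel_measurable borel"
  using sol_meas[of k i] unfolding sol_tube_def by blast

lemma borel_measurable_sol_input [measurable]: "(\<lambda>p. sol_input k p i) \<in> borel_measurable borel"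
  using sol_meas[of k i] unfolding sol_input_def by blast

lemma borel_measurable_mean_state [measurable]:
  "(\<lambda>p. ms (fst p) (sol_tube k p) (sol_input k p) i) \<in> borel_measurable borel"
proof (induction i)
  case (Suc i)
  note Suc[measurable]
  show ?case unfolding mean_state_Suc_eq by measurable
qed simp

lemma borel_measurable_mean_input [measurable]:
  "(\<lambda>p. mi (fst p) (sol_tube k p) (sol_input k p) i) \<in> borel_measurable borel"
  unfolding mean_input_def by measurable

lemma borel_measurable_cost_sol: "(\<lambda>p. cost (fst p) (sol k (fst p) (snd p))) \<in> borel_measurable borel"
proof -
  have "(\<lambda>p. cost (fst p) (sol k (fst p) (snd p))) = (\<lambda>p.
     (\<Sum>i<N. ell (ms (fst p) (sol_tube k p) (sol_input k p) i) (mi (fst p) (sol_tube k p) (sol_input k p) i))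
     + Vf (ms (fst p) (sol_tube k p) (sol_input k p) N) + cov_cost)"
  proof
    fix p
    show "cost (fst p) (sol k (fst p) (snd p)) =
     (\<Sum>i<N. ell (ms (fst p) (sol_tube k p) (sol_input k p) i) (mi (fst p) (sol_tube k p) (sol_input k p) i))
     + Vf (ms (fst p) (sol_tube k p) (sol_input k p) N) + cov_cost"
      by (cases "sol k (fst p) (snd p)") (simp only: cost_JN_eq sol_tube_def sol_input_def fst_conv snd_conv)
  qed
  then show ?thesis by simp
qed

lemma borel_measurable_cl_input [measurable]: "(\<lambda>p. cl_input K sol k p) \<in> borel_measurable borel"
proof -
  have "cl_input K sol k = (\<lambda>p. sol_input k p 0 + K *v (fst p - sol_tube k p 0))"
    by (simp add: fun_eq_iff cl_input_def sol_tube_def sol_input_def split: prod.splits)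
  then show ?thesis by simp
qed

lemma borel_measurable_component [measurable]: "(\<lambda>om. om j) \<in> borel_measurable noise_space"
proof -
  have "(\<lambda>om. om j) \<in> measurable noise_space D" by simp
  then show ?thesis unfolding measurable_cong_sets[OF refl sets_D] .
qed

lemma borel_measurable_closed_loop: "(\<lambda>om. cl om k) \<in> borel_measurable noise_space"
proof (induction k)
  case (Suc k)
  have F: "(\<lambda>p. A *v fst p + B *v cl_input K sol k p) \<in> borel_measurable borel"
    and G: "(\<lambda>p. sol_tube k p 1) \<in> borel_measurable borel" by measurable
  have "(\<lambda>om. (A *v fst (cl om k) + B *v cl_input K sol k (cl om k) + om k, sol_tube k (cl om k) 1))
      \<in> borel_measurable noise_space"
    using measurable_compose[OF Suc F] measurable_compose[OF Suc G] by measurable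
  moreover have "(\<lambda>om. cl om (Suc k))
      = (\<lambda>om. (A *v fst (cl om k) + B *v cl_input K sol k (cl om k) + om k, sol_tube k (cl om k) 1))"
    by (simp add: fun_eq_iff Let_def sol_tube_def)
  ultimately show ?case by simp
qed simp

lemma borel_measurable_opt_val_closed_loop:
  "(\<lambda>om. J_cl k om) \<in> borel_measurable noise_space"
  unfolding opt_val_closed_loop
  using measurable_compose[OF borel_measurable_closed_loop borel_measurable_cost_sol] by simp

lemma borel_measurable_stage_cost_closed_loop:
  "(\<lambda>om. ell_cl k om) \<in> borel_measurable noise_space"
proof -
  have "(\<lambda>p. ell (fst p) (cl_input K sol k p)) \<in> borel_measurable borel" by measurable
  from measurable_compose[OF borel_measurable_closed_loop this] show ?thesis by simp
qed

end

section \<open>Expected decrease and average cost\<close>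

lemma (in prob_space) integrable_PiM_component:
  fixes f :: "'a \<Rightarrow> real"
  assumes "integrable M f"
  shows "integrable (PiM UNIV (\<lambda>_. M)) (\<lambda>om. f (om k))"
proof -
  have "distr (PiM UNIV (\<lambda>_. M)) M (\<lambda>om. om k) = M"
    by (rule distr_PiM_component) (simp_all add: prob_space_axioms)
  then show ?thesis
    using integrable_distr_eq[of "\<lambda>om. om k" "PiM UNIV (\<lambda>_. M)" M f] assms by simp
qed

lemma (in prob_space) integral_PiM_fun_upd:
  fixes f :: "(nat \<Rightarrow> 'a) \<Rightarrow> real" and k :: nat
  assumes f: "integrable (PiM UNIV (\<lambda>_. M)) f"
  defines "P \<equiv> PiM (UNIV - {k}) (\<lambda>_. M)"
  shows "(\<integral>om. f om \<partial>PiM UNIV (\<lambda>_. M)) = (\<integral>X. (\<integral>x. f (X(k := x)) \<partial>M) \<partial>P)"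
    and "integrable P (\<lambda>X. \<integral>x. f (X(k := x)) \<partial>M)"
    and "AE X in P. integrable M (\<lambda>x. f (X(k := x)))"
proof -
  interpret P: prob_space P unfolding P_def by (rule prob_space_PiM) (simp add: prob_space_axioms)
  interpret MP: pair_sigma_finite M P by unfold_locales
  define T where "T = (\<lambda>p :: 'a \<times> (nat \<Rightarrow> 'a). (snd p)(k := fst p))"
  have T: "T \<in> measurable (M \<Otimes>\<^sub>M P) (PiM UNIV (\<lambda>_. M))"
    unfolding T_def P_def by (rule measurable_fun_upd[where J = "UNIV - {k}"]) auto
  have "distr (M \<Otimes>\<^sub>M P) (PiM (insert k (UNIV - {k})) (\<lambda>_. M)) (\<lambda>(x, X). X(k := x))
      = PiM (insert k (UNIV - {k})) (\<lambda>_. M)"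
    unfolding P_def by (rule distr_pair_PiM_eq_PiM) (simp_all add: prob_space_axioms)
  moreover have "(\<lambda>(x, X). X(k := x)) = T" by (simp add: T_def fun_eq_iff split_beta)
  moreover have "insert k (UNIV - {k}) = (UNIV :: nat set)" by auto
  ultimately have distr_T: "distr (M \<Otimes>\<^sub>M P) (PiM UNIV (\<lambda>_. M)) T = PiM UNIV (\<lambda>_. M)" by simp
  have f_meas: "f \<in> borel_measurable (PiM UNIV (\<lambda>_. M))" using f by simp
  have int: "integrable (M \<Otimes>\<^sub>M P) (\<lambda>(x, X). f (X(k := x)))"
    using integrable_distr_eq[OF T f_meas] f distr_T by (simp add: T_def case_prod_beta')
  have "(\<integral>om. f om \<partial>PiM UNIV (\<lambda>_. M)) = (\<integral>p. f (T p) \<partial>(M \<Otimes>\<^sub>M P))"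
    using integral_distr[OF T f_meas] distr_T by simp
  also have "\<dots> = (\<integral>X. (\<integral>x. f (X(k := x)) \<partial>M) \<partial>P)"
    using MP.integral_snd[OF int] by (simp add: T_def case_prod_beta')
  finally show "(\<integral>om. f om \<partial>PiM UNIV (\<lambda>_. M)) = (\<integral>X. (\<integral>x. f (X(k := x)) \<partial>M) \<partial>P)" .
  show "integrable P (\<lambda>X. \<integral>x. f (X(k := x)) \<partial>M)"
    using MP.integrable_snd[OF int] by simp
  show "AE X in P. integrable M (\<lambda>x. f (X(k := x)))"
    using MP.AE_integrable_snd[OF int] by simp
qed

context tube_mpc
begin

sublocale noise: prob_space noise_space
  by (rule prob_space_PiM) (simp add: prob_space_axioms)

context
  fixes c0 Vm :: real
  assumes ell_lower: "\<And>y u. c0 \<le> ell y u" and Vf_lower: "\<And>y. Vm \<le> Vf y"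
begin

lemma integrable_opt_val_closed_loop: "integrable noise_space (J_cl k)"
proof (induction k)
  case (Suc k)
  define c where "c = - 3 * c0 - 2 * cov_cost - 4 * c0 * real (N - 1) - 4 * Vm"
  define b where "b = real N * c0 + Vm + cov_cost"
  have "integrable noise_space (\<lambda>om. \<bar>b\<bar> + \<bar>3 * J_cl k om + noise_penalty (om k) + c\<bar>)"
    by (intro Bochner_Integration.integrable_add integrable_abs noise.integrable_const
        Bochner_Integration.integrable_mult_right Suc integrable_PiM_component integrable_noise_penalty)
  moreover have "norm (J_cl (Suc k) om) \<le> norm (\<bar>b\<bar> + \<bar>3 * J_cl k om + noise_penalty (om k) + c\<bar>)" for om
    using opt_val_Suc_crude_le[OF ell_lower Vf_lower, where k = k and om = om and w = "om k"]
      opt_val_closed_loop_ge[OF ell_lower Vf_lower, where k = "Suc k" and om = om]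
    by (simp add: b_def c_def)
  ultimately show ?case
    by (intro Bochner_Integration.integrable_bound[OF _ borel_measurable_opt_val_closed_loop]) auto
qed simp

lemma integrable_stage_cost_closed_loop: "integrable noise_space (ell_cl k)"
proof -
  define b where "b = real (N - 1) * c0 + Vm + cov_cost"
  have "integrable noise_space (\<lambda>om. \<bar>c0\<bar> + \<bar>J_cl k om - b\<bar>)"
    by (intro Bochner_Integration.integrable_add integrable_abs noise.integrable_const
        Bochner_Integration.integrable_diff integrable_opt_val_closed_loop)
  moreover have "norm (ell_cl k om) \<le> norm (\<bar>c0\<bar> + \<bar>J_cl k om - b\<bar>)" for om
    using stage_cost_closed_loop_le[OF ell_lower Vf_lower, where k = k and om = om]
      ell_lower[of "fst (cl om k)" "cl_input K sol k (cl om k)"]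
    by (simp add: b_def)
  ultimately show ?thesis
    by (intro Bochner_Integration.integrable_bound[OF _ borel_measurable_stage_cost_closed_loop]) auto
qed

text \<open>Conditioning on the past, i.e.\ integrating out the \<open>k\<close>-th noise first, turns the conditional
  decrease into a decrease of expectations.\<close>
lemma expected_opt_val_Suc_le:
  "(\<integral>om. J_cl (Suc k) om \<partial>noise_space)
    \<le> (\<integral>om. J_cl k om \<partial>noise_space) - (\<integral>om. ell_cl k om \<partial>noise_space) + trace (Pf ** Sw)"
proof -
  define P where "P = PiM (UNIV - {k}) (\<lambda>_::nat. D)"
  define g where "g = (\<lambda>om. J_cl k om - ell_cl k om + trace (Pf ** Sw))"
  have int_J: "integrable noise_space (J_cl (Suc k))" and int_g: "integrable noise_space g"
    unfolding g_def
    by (intro Bochner_Integration.integrable_add Bochner_Integration.integrable_diff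
        integrable_opt_val_closed_loop integrable_stage_cost_closed_loop noise.integrable_const)+
  note J_split = integral_PiM_fun_upd[OF int_J, where k = k, folded P_def]
  note g_split = integral_PiM_fun_upd[OF int_g, where k = k, folded P_def]
  have g_upd: "(\<integral>x. g (X(k := x)) \<partial>D) = g X" for X
    by (simp add: g_def closed_loop_fun_upd prob_space)
  have "(\<integral>X. (\<integral>x. J_cl (Suc k) (X(k := x)) \<partial>D) \<partial>P) \<le> (\<integral>X. (\<integral>x. g (X(k := x)) \<partial>D) \<partial>P)"
  proof (rule integral_mono_AE[OF J_split(2) g_split(2)])
    show "AE X in P. (\<integral>x. J_cl (Suc k) (X(k := x)) \<partial>D) \<le> (\<integral>x. g (X(k := x)) \<partial>D)"
      using J_split(3)
    proof (rule AE_mp, intro AE_I2 impI)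
      fix X assume int_X: "integrable D (\<lambda>x. J_cl (Suc k) (X(k := x)))"
      have "(\<integral>x. J_cl (Suc k) (X(k := x)) \<partial>D) - J_cl k X
          = (\<integral>w. J_cl (k + 1) (X(k := w)) - J_cl k X \<partial>D)"
        using Bochner_Integration.integral_diff[OF int_X integrable_const] by (simp add: prob_space)
      also have "\<dots> \<le> - ell_cl k X + trace (Pf ** Sw)"
        using Bochner_Integration.integrable_diff[OF int_X integrable_const]
        by (intro expected_opt_val_decrease) (simp add: closed_loop_fun_upd)
      finally show "(\<integral>x. J_cl (Suc k) (X(k := x)) \<partial>D) \<le> (\<integral>x. g (X(k := x)) \<partial>D)"
        unfolding g_upd by (simp add: g_def)
    qed
  qed
  then have "(\<integral>om. J_cl (Suc k) om \<partial>noise_space) \<le> (\<integral>om. g om \<partial>noise_space)"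
    using J_split(1) g_split(1) by simp
  also have "\<dots> = (\<integral>om. J_cl k om \<partial>noise_space) - (\<integral>om. ell_cl k om \<partial>noise_space) + trace (Pf ** Sw)"
    unfolding g_def
    by (simp add: integrable_opt_val_closed_loop integrable_stage_cost_closed_loop noise.prob_space)
  finally show ?thesis .
qed

lemma sum_expected_stage_cost_le:
  obtains c where "\<And>T. (\<Sum>k<T. \<integral>om. ell_cl k om \<partial>noise_space) \<le> c + real T * trace (Pf ** Sw)"
proof -
  have telescope: "(\<Sum>k<T. \<integral>om. ell_cl k om \<partial>noise_space)
      \<le> (\<integral>om. J_cl 0 om \<partial>noise_space) - (\<integral>om. J_cl T om \<partial>noise_space) + real T * trace (Pf ** Sw)" for T
  proof (induction T)
    case (Suc T)
    then show ?case using expected_opt_val_Suc_le[of T] by (simp add: algebra_simps)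
  qed simp
  have "real N * c0 + Vm + cov_cost \<le> (\<integral>om. J_cl T om \<partial>noise_space)" for T
    using integral_mono[OF noise.integrable_const integrable_opt_val_closed_loop,
        of "real N * c0 + Vm + cov_cost" T] opt_val_closed_loop_ge[OF ell_lower Vf_lower]
    by (simp add: noise.prob_space)
  with telescope show ?thesis
    by (intro that[of "(\<integral>om. J_cl 0 om \<partial>noise_space) - (real N * c0 + Vm + cov_cost)"]) (smt (verit))
qed

lemma limsup_average_stage_cost_le:
  "limsup (\<lambda>T. ereal ((1 / real T) * (\<Sum>k<T. \<integral>om. ell_cl k om \<partial>noise_space))) \<le> ereal (trace (Pf ** Sw))"
proof -
  let ?tr = "trace (Pf ** Sw)"
  obtain c where c: "\<And>T. (\<Sum>k<T. \<integral>om. ell_cl k om \<partial>noise_space) \<le> c + real T * ?tr"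
    using sum_expected_stage_cost_le by blast
  have "eventually (\<lambda>T. ereal ((1 / real T) * (\<Sum>k<T. \<integral>om. ell_cl k om \<partial>noise_space))
      \<le> ereal (?tr + c / real T)) sequentially"
  proof (rule eventually_sequentiallyI[of 1])
    fix T :: nat assume T: "1 \<le> T"
    have "(1 / real T) * (\<Sum>k<T. \<integral>om. ell_cl k om \<partial>noise_space) \<le> (1 / real T) * (c + real T * ?tr)"
      using c[of T] by (intro mult_left_mono) auto
    also have "\<dots> = ?tr + c / real T" using T by (simp add: field_simps)
    finally show "ereal ((1 / real T) * (\<Sum>k<T. \<integral>om. ell_cl k om \<partial>noise_space)) \<le> ereal (?tr + c / real T)"
      by simp
  qed
  then have "limsup (\<lambda>T. ereal ((1 / real T) * (\<Sum>k<T. \<integral>om. ell_cl k om \<partial>noise_space)))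
      \<le> limsup (\<lambda>T. ereal (?tr + c / real T))"
    by (rule Limsup_mono)
  also have "\<dots> = ereal ?tr"
    using tendsto_add[OF tendsto_const lim_const_over_n, of ?tr c]
    by (intro lim_imp_Limsup trivial_limit_sequentially) (simp add: lim_ereal)
  finally show ?thesis .
qed


end

lemma average_stage_cost_bound:
  assumes ell_lower: "\<And>y u. c0 \<le> ell y u"
  shows "(\<forall>k. integrable noise_space (ell_cl k))
    \<and> limsup (\<lambda>T. ereal ((1 / real T) * (\<Sum>k<T. \<integral>om. ell_cl k om \<partial>noise_space)))
        \<le> ereal (trace (Pf ** Sw))"
proof -
  obtain Vm where Vf_lower: "\<And>y. Vm \<le> Vf y"
    using term_cost_bounded_below[OF ell_lower] by blast
  show ?thesis
    using integrable_stage_cost_closed_loop[OF ell_lower Vf_lower]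
      limsup_average_stage_cost_le[OF ell_lower Vf_lower] by blast
qed


end

theorem proposition4:
  fixes A :: "real^'n^'n" and B :: "real^'m^'n" and K :: "real^'n^'m"
    and Q :: "real^'n^'n" and q :: "real^'n" and R :: "real^'m^'m" and r :: "real^'m"
    and Pf :: "real^'n^'n" and pf :: "real^'n"
    and Sw :: "real^'n^'n" and D :: "(real^'n) measure"
    and Zb :: "nat \<Rightarrow> ((real^'n) \<times> (real^'m)) set" and Xf :: "(real^'n) set"
    and N :: nat and x0 :: "real^'n"
    and sol :: "nat \<Rightarrow> real^'n \<Rightarrow> real^'n \<Rightarrow> ((nat \<Rightarrow> real^'n) \<times> (nat \<Rightarrow> real^'m) \<times> real)"
  defines "ell \<equiv> stage_cost Q q R r"
    and "J \<equiv> opt_val N A B K Q q R r Pf pf Sw Zb Xf"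
    and "M \<equiv> PiM UNIV (\<lambda>_::nat. D)"
    and "x \<equiv> (\<lambda>om k. fst (closed_loop A B K sol x0 om k))"
    and "u \<equiv> (\<lambda>om k. cl_input K sol k (closed_loop A B K sol x0 om k))"
  assumes N_pos: "1 \<le> N"
    and schur_AK: "schur (A + B ** K)"
    and Q_psd: "psd_mat Q" and R_psd: "psd_mat R"
    and D_prob: "prob_space D" and D_sets: "sets D = sets borel"
    and D_int1: "\<And>i. integrable D (\<lambda>w. w $ i)"
    and D_int2: "\<And>i j. integrable D (\<lambda>w. w $ i * w $ j)"
    and D_mean: "\<And>i. (\<integral>w. w $ i \<partial>D) = 0"
    and D_cov: "\<And>i j. (\<integral>w. w $ i * w $ j \<partial>D) = Sw $ i $ j"
    and Sw_pd: "pd_mat Sw"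
    and Xf_Zb: "\<And>z k. z \<in> Xf \<Longrightarrow> (z, K *v z) \<in> Zb k"
    and Xf_inv: "\<And>z. z \<in> Xf \<Longrightarrow> (A + B ** K) *v z \<in> Xf"
    and Vf_decr: "\<And>y. term_cost Pf pf ((A + B ** K) *v y) = term_cost Pf pf y - ell y (K *v y)"
    and feas0: "\<exists>d. feasible N A B Zb Xf 0 x0 x0 d"
    and sol_min: "\<And>k y zp. (\<exists>d. feasible N A B Zb Xf k y zp d) \<Longrightarrow>
        is_minimizer N A B K Q q R r Pf pf Sw Zb Xf k y zp (sol k y zp)"
    and sol_meas: "\<And>k i.
        (\<lambda>p. fst (sol k (fst p) (snd p)) i) \<in> borel_measurable borel \<and>
        (\<lambda>p. fst (snd (sol k (fst p) (snd p))) i) \<in> borel_measurable borel \<and>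
        (\<lambda>p. snd (snd (sol k (fst p) (snd p)))) \<in> borel_measurable borel"
  shows
    "(\<forall>om k.
        integrable D (\<lambda>w. J (k + 1) (x (om(k := w)) (k + 1))
                                      (snd (closed_loop A B K sol x0 (om(k := w)) (k + 1)))
                          - J k (x om k) (snd (closed_loop A B K sol x0 om k))) \<longrightarrow>
        (\<integral>w. J (k + 1) (x (om(k := w)) (k + 1))
                        (snd (closed_loop A B K sol x0 (om(k := w)) (k + 1)))
             - J k (x om k) (snd (closed_loop A B K sol x0 om k)) \<partial>D)
          \<le> - ell (x om k) (u om k) + trace (Pf ** Sw))
     \<and>
     ((\<exists>c. \<forall>y v. c \<le> ell y v) \<longrightarrow>
        (\<forall>k. integrable M (\<lambda>om. ell (x om k) (u om k))) \<and>
        limsup (\<lambda>T. ereal ((1 / real T) * (\<Sum>k<T. \<integral>om. ell (x om k) (u om k) \<partial>M)))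
          \<le> ereal (trace (Pf ** Sw)))"
proof -
  have Vf_decr': "\<And>y. term_cost Pf pf ((A + B ** K) *v y)
      = term_cost Pf pf y - stage_cost Q q R r y (K *v y)"
    using Vf_decr unfolding ell_def .
  interpret tube_mpc D Sw A B K Q q R r Pf pf Zb Xf N x0 sol
    by (intro tube_mpc.intro centred_noise.intro centred_noise_axioms.intro tube_mpc_axioms.intro)
      (fact D_prob D_sets D_int1 D_int2 D_mean D_cov N_pos schur_AK Q_psd R_psd Xf_Zb Xf_inv
        Vf_decr' feas0 sol_min sol_meas)+
  show ?thesis
    unfolding J_def x_def u_def ell_def M_def
    using expected_opt_val_decrease average_stage_cost_bound by blast
qed

end
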